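(* Lattices $U(2)+A_2+2D_4$, $U(2)+A_2+D_4+E_8$, $U(2)+A_2+E_8(2)$, and $U(2)+A_2+E_8$ are achiral.
   Context: $U$ hyperbolic plane, $A_n,D_n,E_n$ positive definite root lattices, $(2)$ multiplies the form by 2, $+$ orthogonal sum. For an even hyperbolic lattice $\mathbb L$ with $\operatorname{discr}_3\mathbb L=\mathbb Z/3$ and $\operatorname{discr}_2$ of period 2: $W$ is generated by reflections in 2-roots ($v^2=2$) and 6-roots ($v^2=6$, $v\cdot\mathbb L\subset3\mathbb Z$); cells $P$ are fundamental chambers of $W$ in the hyperbolic space, each lifting to $\pm P^\#$ in the double cover. An automorphism is $P$-direct if it preserves $P^\#$, $\mathbb Z/3$-reversing if it acts as $-\operatorname{id}$ on $\operatorname{discr}_3\mathbb L$. $\mathbb L$ is achiral if it admits an automorphism that is $\mathbb Z/3$-reversing and $P$-direct for some cell $P$. *)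

theory Defs
  imports "HOL-Analysis.Analysis"
begin

type_synonym gram = "int list list"

definition gentry :: "gram \<Rightarrow> nat \<Rightarrow> nat \<Rightarrow> int" where
  "gentry m i j = (if i < length m \<and> j < length (m ! i) then m ! i ! j else 0)"

definition rk :: "gram \<Rightarrow> nat" where
  "rk m = length m"

definition osum :: "gram \<Rightarrow> gram \<Rightarrow> gram" (infixr "\<oplus>\<^sub>L" 65) where
  "osum a b = map (\<lambda>r. r @ replicate (length b) 0) a @ map (\<lambda>r. replicate (length a) 0 @ r) b"

definition scale :: "int \<Rightarrow> gram \<Rightarrow> gram" where
  "scale k m = map (map (\<lambda>x. k * x)) m"

definition U_lat :: gram where "U_lat = [[0,1],[1,0]]"

definition A2_lat :: gram where "A2_lat = [[2,-1],[-1,2]]"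

definition D4_lat :: gram where
  "D4_lat = [[2,-1,0,0],[-1,2,-1,-1],[0,-1,2,0],[0,-1,0,2]]"

definition E8_lat :: gram where
  "E8_lat = [[ 2, 0,-1, 0, 0, 0, 0, 0],
             [ 0, 2, 0,-1, 0, 0, 0, 0],
             [-1, 0, 2,-1, 0, 0, 0, 0],
             [ 0,-1,-1, 2,-1, 0, 0, 0],
             [ 0, 0, 0,-1, 2,-1, 0, 0],
             [ 0, 0, 0, 0,-1, 2,-1, 0],
             [ 0, 0, 0, 0, 0,-1, 2,-1],
             [ 0, 0, 0, 0, 0, 0,-1, 2]]"

definition vspace :: "gram \<Rightarrow> (nat \<Rightarrow> real) set" where
  "vspace m = {x. \<forall>i\<ge>rk m. x i = 0}"

definition latt :: "gram \<Rightarrow> (nat \<Rightarrow> real) set" where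
  "latt m = {x \<in> vspace m. \<forall>i. x i \<in> \<int>}"

definition bil :: "gram \<Rightarrow> (nat \<Rightarrow> real) \<Rightarrow> (nat \<Rightarrow> real) \<Rightarrow> real" where
  "bil m x y = (\<Sum>i<rk m. \<Sum>j<rk m. of_int (gentry m i j) * x i * y j)"

definition dual_latt :: "gram \<Rightarrow> (nat \<Rightarrow> real) set" where
  "dual_latt m = {x \<in> vspace m. \<forall>v \<in> latt m. bil m x v \<in> \<int>}"

definition mapp :: "gram \<Rightarrow> (nat \<Rightarrow> nat \<Rightarrow> int) \<Rightarrow> (nat \<Rightarrow> real) \<Rightarrow> (nat \<Rightarrow> real)" where
  "mapp m M x = (\<lambda>i. if i < rk m then (\<Sum>j<rk m. of_int (M i j) * x j) else 0)"

definition is_aut :: "gram \<Rightarrow> (nat \<Rightarrow> nat \<Rightarrow> int) \<Rightarrow> bool" where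
  "is_aut m M \<longleftrightarrow>
     (\<forall>x\<in>vspace m. \<forall>y\<in>vspace m. bil m (mapp m M x) (mapp m M y) = bil m x y) \<and>
     (\<exists>N. \<forall>x\<in>vspace m. mapp m N (mapp m M x) = x \<and> mapp m M (mapp m N x) = x)"

text \<open>acts as -id on the 3-primary part of the discriminant group L^*/L\<close>
definition z3_reversing :: "gram \<Rightarrow> (nat \<Rightarrow> nat \<Rightarrow> int) \<Rightarrow> bool" where
  "z3_reversing m M \<longleftrightarrow>
     (\<forall>x\<in>dual_latt m. (\<exists>k::nat. (\<lambda>i. 3 ^ k * x i) \<in> latt m) \<longrightarrow> (\<lambda>i. mapp m M x i + x i) \<in> latt m)"

definition root2 :: "gram \<Rightarrow> (nat \<Rightarrow> real) \<Rightarrow> bool" where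
  "root2 m v \<longleftrightarrow> v \<in> latt m \<and> bil m v v = 2"

definition root6 :: "gram \<Rightarrow> (nat \<Rightarrow> real) \<Rightarrow> bool" where
  "root6 m v \<longleftrightarrow> v \<in> latt m \<and> bil m v v = 6 \<and> (\<forall>w\<in>latt m. bil m v w / 3 \<in> \<int>)"

definition mirrors :: "gram \<Rightarrow> (nat \<Rightarrow> real) set" where
  "mirrors m = (\<Union>r\<in>{r. root2 m r \<or> root6 m r}. {x \<in> vspace m. bil m x r = 0})"

text \<open>Cone over the hyperbolic space (the roots have positive square, so
  the hyperbolic space consists of the negative vectors); its two
  components give the double cover.\<close>
definition hcone :: "gram \<Rightarrow> (nat \<Rightarrow> real) set" where
  "hcone m = {x \<in> vspace m. bil m x x < 0}"

text \<open>A lifted cell P^# (as an open cone): a connected component of the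
  complement of the mirrors of W in the cone.\<close>
definition is_cell :: "gram \<Rightarrow> (nat \<Rightarrow> real) set \<Rightarrow> bool" where
  "is_cell m K \<longleftrightarrow>
     (\<exists>x \<in> hcone m - mirrors m. K = connected_component_set (hcone m - mirrors m) x)"

definition achiral :: "gram \<Rightarrow> bool" where
  "achiral m \<longleftrightarrow>
     (\<exists>M. is_aut m M \<and> z3_reversing m M \<and> (\<exists>K. is_cell m K \<and> mapp m M ` K = K))"

end

theory Submission
  imports Defs
begin

(* For each lattice an explicit certificate is checked by evaluation. It provides an integral
   isometric involution M acting as -1 on the 3-part of the discriminant group (because
   6 G^-1 is integral and M + 1 = P G + 3 Q), together with a negative vector h fixed by M
   that lies on no mirror. The connected component of the complement of the mirrors that
   contains h is then a cell, and M, being a homeomorphism of that complement fixing h,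
   maps it onto itself. *)

lemma bil_cong:
  assumes "\<And>i. i < rk m \<Longrightarrow> x i = x' i" and "\<And>j. j < rk m \<Longrightarrow> y j = y' j"
  shows "bil m x y = bil m x' y'"
  unfolding bil_def using assms by (intro sum.cong refl) auto

lemma bil_add_right: "bil m z (\<lambda>i. x i + y i) = bil m z x + bil m z y"
  unfolding bil_def by (simp add: algebra_simps sum.distrib)

lemma bil_mult_left: "bil m (\<lambda>i. c * x i) z = c * bil m x z"
  unfolding bil_def by (simp add: sum_distrib_left algebra_simps)

lemma bil_mult_right: "bil m z (\<lambda>i. c * x i) = c * bil m z x"
  unfolding bil_def by (simp add: sum_distrib_left algebra_simps)

lemma bil_diff_left: "bil m (\<lambda>i. x i - y i) z = bil m x z - bil m y z"
  unfolding bil_def by (simp add: algebra_simps sum_subtractf)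

lemma bil_diff_right: "bil m z (\<lambda>i. x i - y i) = bil m z x - bil m z y"
  unfolding bil_def by (simp add: algebra_simps sum_subtractf)

lemma bil_sum_left: "bil m (\<lambda>i. \<Sum>a\<in>A. f a * x a i) z = (\<Sum>a\<in>A. f a * bil m (x a) z)"
  unfolding bil_def
  by (simp add: sum_distrib_left sum_distrib_right algebra_simps sum.swap[of _ A])

lemma bil_sum_right: "bil m z (\<lambda>i. \<Sum>a\<in>A. f a * x a i) = (\<Sum>a\<in>A. f a * bil m z (x a))"
  unfolding bil_def
  by (simp add: sum_distrib_left sum_distrib_right algebra_simps sum.swap[of _ A])

lemma bil_eq_sum_gram: "bil m x y = (\<Sum>i<rk m. x i * (\<Sum>j<rk m. of_int (gentry m i j) * y j))"
  unfolding bil_def by (simp add: sum_distrib_left algebra_simps)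

lemma bil_Ints:
  assumes "\<And>i. x i \<in> \<int>" and "\<And>j. y j \<in> \<int>"
  shows "bil m x y \<in> \<int>"
  unfolding bil_def using assms by (intro Ints_sum Ints_mult) auto

definition symmetric_gram :: "gram \<Rightarrow> bool" where
  "symmetric_gram m \<longleftrightarrow> (\<forall>i<rk m. \<forall>j<rk m. gentry m i j = gentry m j i)"

lemma bil_commute: "symmetric_gram m \<Longrightarrow> bil m x y = bil m y x"
  unfolding bil_def symmetric_gram_def
  by (subst sum.swap) (auto intro!: sum.cong simp: algebra_simps)

lemma latt_vspace: "x \<in> latt m \<Longrightarrow> x \<in> vspace m"
  by (simp add: latt_def)

lemma unit_vec_latt: "j < rk m \<Longrightarrow> (\<lambda>i. if i = j then 1 else 0) \<in> latt m"
  by (auto simp: latt_def vspace_def)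

lemma mapp_vspace: "mapp m M x \<in> vspace m"
  by (simp add: mapp_def vspace_def)

lemma mapp_latt: "x \<in> latt m \<Longrightarrow> mapp m M x \<in> latt m"
  using mapp_vspace[of m M x]
  by (auto simp: mapp_def latt_def intro!: Ints_sum Ints_mult)

lemma continuous_on_mapp: "continuous_on S (mapp m M)"
  unfolding mapp_def
proof (intro continuous_on_coordinatewise_then_product)
  fix i
  show "continuous_on S (\<lambda>x. if i < rk m then \<Sum>j<rk m. of_int (M i j) * x j else 0)"
    by (cases "i < rk m")
      (auto intro!: continuous_intros continuous_on_subset[OF continuous_on_product_coordinates])
qed

section \<open>Fixed points of isometric involutions\<close>

locale isometric_involution =
  fixes m :: gram and M :: "nat \<Rightarrow> nat \<Rightarrow> int"
  assumes bil_mapp [simp]: "bil m (mapp m M x) (mapp m M y) = bil m x y"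
    and mapp_mapp: "x \<in> vspace m \<Longrightarrow> mapp m M (mapp m M x) = x"
begin

lemma bil_mapp_swap: "y \<in> vspace m \<Longrightarrow> bil m (mapp m M x) y = bil m x (mapp m M y)"
  by (metis bil_mapp mapp_mapp)

lemma root2_mapp: "root2 m r \<Longrightarrow> root2 m (mapp m M r)"
  by (simp add: root2_def mapp_latt)

lemma root6_mapp:
  assumes "root6 m r"
  shows "root6 m (mapp m M r)"
proof -
  have "bil m (mapp m M r) w / 3 \<in> \<int>" if "w \<in> latt m" for w
    using assms that by (auto simp: root6_def bil_mapp_swap latt_vspace mapp_latt)
  then show ?thesis
    using assms by (simp add: root6_def mapp_latt)
qed

lemma mirrors_mapp:
  assumes "x \<in> vspace m" and "mapp m M x \<in> mirrors m"
  shows "x \<in> mirrors m"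
proof -
  obtain r where r: "root2 m r \<or> root6 m r" and "bil m (mapp m M x) r = 0"
    using assms(2) by (auto simp: mirrors_def)
  then have "bil m x (mapp m M r) = 0"
    by (auto simp: bil_mapp_swap root2_def root6_def latt_vspace)
  moreover have "root2 m (mapp m M r) \<or> root6 m (mapp m M r)"
    using r root2_mapp root6_mapp by blast
  ultimately show ?thesis
    using assms(1) by (auto simp: mirrors_def)
qed

lemma homeomorphism_mapp:
  "homeomorphism (hcone m - mirrors m) (hcone m - mirrors m) (mapp m M) (mapp m M)"
proof -
  have "mapp m M ` (hcone m - mirrors m) \<subseteq> hcone m - mirrors m"
    using mirrors_mapp by (auto simp: hcone_def mapp_vspace)
  then show ?thesis
    by (intro homeomorphismI continuous_on_mapp) (auto simp: hcone_def mapp_mapp)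
qed

lemma achiral_if_fixes:
  assumes "z3_reversing m M" and h: "h \<in> hcone m - mirrors m" and "mapp m M h = h"
  shows "achiral m"
proof -
  let ?K = "connected_component_set (hcone m - mirrors m) h"
  have "is_aut m M"
    unfolding is_aut_def using mapp_mapp mapp_vspace by auto
  moreover have "is_cell m ?K"
    using h unfolding is_cell_def by blast
  moreover have "mapp m M ` ?K = ?K"
    using connected_component_set_homeomorphism[OF homeomorphism_mapp h] assms(3) by simp
  ultimately show ?thesis
    using assms(1) unfolding achiral_def by blast
qed

end

definition ventry :: "int list \<Rightarrow> nat \<Rightarrow> int" where
  "ventry v j = (if j < length v then v ! j else 0)"

definition real_vec :: "int list \<Rightarrow> nat \<Rightarrow> real" where
  "real_vec v j = of_int (ventry v j)"

lemma real_vec_vspace: "length v \<le> rk m \<Longrightarrow> real_vec v \<in> vspace m"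
  by (simp add: real_vec_def ventry_def vspace_def)

definition list_mat :: "nat \<Rightarrow> (nat \<Rightarrow> nat \<Rightarrow> int) \<Rightarrow> int list list" where
  "list_mat n f = map (\<lambda>i. map (f i) [0..<n]) [0..<n]"

lemma gentry_list_mat: "i < n \<Longrightarrow> j < n \<Longrightarrow> gentry (list_mat n f) i j = f i j"
  by (simp add: list_mat_def gentry_def)

lemma list_mat_eq_iff: "list_mat n f = list_mat n g \<longleftrightarrow> (\<forall>i<n. \<forall>j<n. f i j = g i j)"
  by (auto simp: list_mat_def map_eq_conv)

definition list_mat_mult :: "nat \<Rightarrow> int list list \<Rightarrow> int list list \<Rightarrow> int list list" where
  "list_mat_mult n A B = list_mat n (\<lambda>i k. \<Sum>j<n. gentry A i j * gentry B j k)"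

definition list_mat_transp :: "nat \<Rightarrow> int list list \<Rightarrow> int list list" where
  "list_mat_transp n A = list_mat n (\<lambda>i j. gentry A j i)"

definition list_mat_vec :: "nat \<Rightarrow> int list list \<Rightarrow> int list \<Rightarrow> int list" where
  "list_mat_vec n A v = map (\<lambda>i. \<Sum>j<n. gentry A i j * ventry v j) [0..<n]"

lemma ventry_list_mat_vec: "i < n \<Longrightarrow> ventry (list_mat_vec n A v) i = (\<Sum>j<n. gentry A i j * ventry v j)"
  by (simp add: list_mat_vec_def ventry_def)

definition int_form :: "gram \<Rightarrow> int list \<Rightarrow> int list \<Rightarrow> int" where
  "int_form m u v = (\<Sum>i<rk m. ventry u i * ventry (list_mat_vec (rk m) m v) i)"

lemma bil_real_vec_right:
  "bil m x (real_vec v) = (\<Sum>i<rk m. of_int (ventry (list_mat_vec (rk m) m v) i) * x i)"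
  unfolding bil_eq_sum_gram by (intro sum.cong refl) (simp add: ventry_list_mat_vec real_vec_def)

lemma bil_real_vec: "bil m (real_vec u) (real_vec v) = of_int (int_form m u v)"
  unfolding bil_real_vec_right int_form_def by (simp add: real_vec_def mult.commute)

lemma sum_mat_mult_vec:
  fixes x :: "nat \<Rightarrow> real"
  shows "(\<Sum>j\<in>J. of_int (\<Sum>k\<in>I. A k * B k j) * x j) = (\<Sum>k\<in>I. of_int (A k) * (\<Sum>j\<in>J. of_int (B k j) * x j))"
proof -
  have "(\<Sum>j\<in>J. of_int (\<Sum>k\<in>I. A k * B k j) * x j) = (\<Sum>j\<in>J. \<Sum>k\<in>I. of_int (A k) * (of_int (B k j) * x j))"
    by (simp add: sum_distrib_right mult.assoc)
  also have "\<dots> = (\<Sum>k\<in>I. \<Sum>j\<in>J. of_int (A k) * (of_int (B k j) * x j))"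
    by (rule sum.swap)
  finally show ?thesis
    by (simp add: sum_distrib_left)
qed

lemma bil_mapp_eq_if:
  assumes "\<And>k l. k < rk m \<Longrightarrow> l < rk m \<Longrightarrow>
             (\<Sum>i<rk m. M i k * (\<Sum>j<rk m. gentry m i j * M j l)) = gentry m k l"
  shows "bil m (mapp m M x) (mapp m M y) = bil m x y"
proof -
  let ?col = "\<lambda>k i. if i < rk m then of_int (M i k) else 0 :: real"
  have mapp_cols: "mapp m M z = (\<lambda>i. \<Sum>k<rk m. z k * ?col k i)" for z
    unfolding mapp_def by (auto simp: fun_eq_iff mult.commute)
  have "bil m (?col k) (?col l) = of_int (gentry m k l)" if "k < rk m" "l < rk m" for k l
    using arg_cong[where f = real_of_int, OF assms[OF that]] unfolding bil_eq_sum_gram by simp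
  then have "bil m (mapp m M x) (mapp m M y) = (\<Sum>k<rk m. x k * (\<Sum>l<rk m. y l * of_int (gentry m k l)))"
    unfolding mapp_cols bil_sum_left bil_sum_right by simp
  also have "\<dots> = bil m x y"
    unfolding bil_eq_sum_gram by (simp add: mult.commute)
  finally show ?thesis .
qed

lemma mapp_mapp_if:
  assumes "\<And>i k. i < rk m \<Longrightarrow> k < rk m \<Longrightarrow> (\<Sum>j<rk m. M i j * M j k) = (if i = k then 1 else 0)"
    and "x \<in> vspace m"
  shows "mapp m M (mapp m M x) = x"
proof
  fix i
  show "mapp m M (mapp m M x) i = x i"
  proof (cases "i < rk m")
    case True
    have "mapp m M (mapp m M x) i = (\<Sum>j<rk m. of_int (M i j) * (\<Sum>k<rk m. of_int (M j k) * x k))"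
      using True by (simp add: mapp_def)
    also have "\<dots> = (\<Sum>k<rk m. of_int (\<Sum>j<rk m. M i j * M j k) * x k)"
      by (rule sum_mat_mult_vec[symmetric])
    also have "\<dots> = (\<Sum>k<rk m. if k = i then x k else 0)"
      using True by (intro sum.cong refl) (auto simp: assms(1))
    finally show ?thesis
      using True by simp
  next
    case False
    then show ?thesis
      using assms(2) by (simp add: mapp_def vspace_def)
  qed
qed

section \<open>The discriminant group\<close>

lemma gram_mult_dual_Ints:
  assumes "symmetric_gram m" and "x \<in> dual_latt m"
  shows "(\<Sum>j<rk m. of_int (gentry m i j) * x j) \<in> \<int>"
proof (cases "i < rk m")
  case True
  have "bil m x (\<lambda>j. if j = i then 1 else 0) \<in> \<int>"
    using assms(2) unit_vec_latt[OF True] by (auto simp: dual_latt_def)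
  moreover have "bil m x (\<lambda>j. if j = i then 1 else 0) = (\<Sum>j<rk m. of_int (gentry m i j) * x j)"
    using assms(1) True unfolding bil_eq_sum_gram symmetric_gram_def
    by (auto simp: if_distrib mult.commute cong: if_cong intro!: sum.cong)
  ultimately show ?thesis by simp
qed (simp add: gentry_def rk_def)

lemma Ints_three_mult:
  fixes y :: real
  assumes "6 * y \<in> \<int>" and "3 ^ k * y \<in> \<int>"
  shows "3 * y \<in> \<int>"
proof (cases k)
  case 0
  then show ?thesis
    using assms(2) by simp
next
  case (Suc j)
  have "odd ((3::nat) ^ j)"
    by simp
  then obtain c :: nat where c: "(3::nat) ^ j = 2 * c + 1"
    by (rule oddE)
  then have "(3::real) ^ j = 2 * of_nat c + 1"
    by (metis of_nat_numeral of_nat_power of_nat_Suc of_nat_mult of_nat_add of_nat_1)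
  then have "3 * y = 3 ^ k * y - of_nat c * (6 * y)"
    using Suc by (simp add: algebra_simps)
  then show ?thesis
    using assms by (simp add: Ints_diff Ints_mult)
qed

text \<open>A vector of \<open>L\<^sup>*\<close> whose class has 3-power order satisfies \<open>3 x \<in> L\<close>, because
  \<open>6 G\<^sup>-\<^sup>1\<close> is integral; then \<open>(M + 1) x = P (G x) + Q (3 x)\<close> is integral.\<close>
lemma z3_reversing_if:
  assumes sym: "symmetric_gram m"
    and six: "\<And>i j. i < rk m \<Longrightarrow> j < rk m \<Longrightarrow> (\<Sum>k<rk m. D i k * gentry m k j) = (if i = j then 6 else 0)"
    and rev: "\<And>i j. i < rk m \<Longrightarrow> j < rk m \<Longrightarrow>
                M i j + (if i = j then 1 else 0) = (\<Sum>k<rk m. P i k * gentry m k j) + 3 * Q i j"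
  shows "z3_reversing m M"
  unfolding z3_reversing_def
proof (intro ballI impI)
  let ?n = "rk m"
  fix x
  assume x: "x \<in> dual_latt m" and "\<exists>k::nat. (\<lambda>i. 3 ^ k * x i) \<in> latt m"
  then obtain k :: nat where k: "(\<lambda>i. 3 ^ k * x i) \<in> latt m"
    by blast
  have xv: "x \<in> vspace m"
    using x by (simp add: dual_latt_def)
  have Gx: "(\<Sum>j<?n. of_int (gentry m i j) * x j) \<in> \<int>" for i
    by (rule gram_mult_dual_Ints[OF sym x])
  have "6 * x i \<in> \<int>" for i
  proof (cases "i < ?n")
    case True
    have "6 * x i = (\<Sum>j<?n. if j = i then 6 * x j else 0)"
      using True by simp
    also have "\<dots> = (\<Sum>j<?n. of_int (\<Sum>k<?n. D i k * gentry m k j) * x j)"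
      using True by (intro sum.cong refl) (auto simp: six)
    also have "\<dots> = (\<Sum>k<?n. of_int (D i k) * (\<Sum>j<?n. of_int (gentry m k j) * x j))"
      by (rule sum_mat_mult_vec)
    also have "\<dots> \<in> \<int>"
      by (rule Ints_sum, rule Ints_mult[OF Ints_of_int Gx])
    finally show ?thesis .
  qed (use xv in \<open>simp add: vspace_def\<close>)
  then have three: "3 * x i \<in> \<int>" for i
    using Ints_three_mult k by (auto simp: latt_def)
  have "mapp m M x i + x i \<in> \<int>" for i
  proof (cases "i < ?n")
    case True
    have "mapp m M x i + x i = (\<Sum>j<?n. of_int (M i j) * x j) + (\<Sum>j<?n. if j = i then x j else 0)"
      using True by (simp add: mapp_def)
    also have "\<dots> = (\<Sum>j<?n. of_int (M i j + (if i = j then 1 else 0)) * x j)"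
      by (subst sum.distrib[symmetric]) (auto intro!: sum.cong simp: distrib_right)
    also have "\<dots> = (\<Sum>j<?n. of_int (\<Sum>k<?n. P i k * gentry m k j) * x j)
                    + (\<Sum>j<?n. of_int (Q i j) * (3 * x j))"
      using True by (simp add: rev sum.distrib algebra_simps)
    also have "\<dots> = (\<Sum>k<?n. of_int (P i k) * (\<Sum>j<?n. of_int (gentry m k j) * x j))
                    + (\<Sum>j<?n. of_int (Q i j) * (3 * x j))"
      by (simp only: sum_mat_mult_vec)
    finally have eq: "mapp m M x i + x i = \<dots>" .
    have "(\<Sum>k<?n. of_int (P i k) * (\<Sum>j<?n. of_int (gentry m k j) * x j)) \<in> \<int>"
      by (rule Ints_sum, rule Ints_mult[OF Ints_of_int Gx])
    moreover have "(\<Sum>j<?n. of_int (Q i j) * (3 * x j)) \<in> \<int>"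
      by (rule Ints_sum, rule Ints_mult[OF Ints_of_int three])
    ultimately show ?thesis
      unfolding eq by (rule Ints_add)
  qed (use xv in \<open>simp add: mapp_def vspace_def\<close>)
  moreover have "(\<lambda>i. mapp m M x i + x i) \<in> vspace m"
    using xv by (simp add: vspace_def mapp_def)
  ultimately show "(\<lambda>i. mapp m M x i + x i) \<in> latt m"
    by (simp add: latt_def)
qed

section \<open>Positivity on a hyperplane\<close>

lemma sum_rank_one_quadratic:
  fixes x :: "nat \<Rightarrow> real"
  shows "(\<Sum>i<n. \<Sum>j<n. of_int (a i * b j) * x i * x j)
           = (\<Sum>i<n. of_int (a i) * x i) * (\<Sum>j<n. of_int (b j) * x j)"
  unfolding sum_product by (intro sum.cong refl) (simp add: algebra_simps)

lemma sum_squares_quadratic: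
  fixes x :: "nat \<Rightarrow> real"
  shows "(\<Sum>i<n. \<Sum>j<n. of_int (\<Sum>(w, c)\<leftarrow>sq. w * ventry c i * ventry c j) * x i * x j)
           = (\<Sum>(w, c)\<leftarrow>sq. of_int w * (\<Sum>i<n. of_int (ventry c i) * x i)\<^sup>2)"
proof (induction sq)
  case Nil
  then show ?case by simp
next
  case (Cons wc sq)
  obtain w c where wc: "wc = (w, c)"
    by (cases wc)
  have "of_int w * (\<Sum>i<n. of_int (ventry c i) * x i)\<^sup>2
          = (\<Sum>i<n. \<Sum>j<n. of_int (w * ventry c i * ventry c j) * x i * x j)"
    unfolding power2_eq_square sum_rank_one_quadratic[symmetric]
    by (simp add: sum_distrib_left algebra_simps)
  moreover have "(\<Sum>i<n. \<Sum>j<n. of_int (\<Sum>(w, c)\<leftarrow>wc # sq. w * ventry c i * ventry c j) * x i * x j)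
      = (\<Sum>i<n. \<Sum>j<n. of_int (w * ventry c i * ventry c j) * x i * x j)
        + (\<Sum>i<n. \<Sum>j<n. of_int (\<Sum>(w, c)\<leftarrow>sq. w * ventry c i * ventry c j) * x i * x j)"
    by (simp add: wc distrib_right sum.distrib)
  ultimately show ?case
    using Cons.IH by (simp add: wc)
qed

text \<open>\<open>s x\<cdot>x + 2 (g\<cdot>x) (l\<cdot>x)\<close> is a sum of squares, and its second term vanishes
  on \<open>g\<^sup>\<bottom>\<close>.\<close>
lemma bil_nonneg_on_perp_if:
  fixes s :: int and g l :: "nat \<Rightarrow> int" and sq :: "(int \<times> int list) list"
  assumes "0 < s" and "\<forall>(w, c) \<in> set sq. 0 \<le> w"
    and sos: "\<And>i j. i < rk m \<Longrightarrow> j < rk m \<Longrightarrow>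
                s * gentry m i j + g i * l j + l i * g j = (\<Sum>(w, c)\<leftarrow>sq. w * ventry c i * ventry c j)"
    and perp: "(\<Sum>i<rk m. of_int (g i) * x i) = 0"
  shows "0 \<le> bil m x x"
proof -
  let ?n = "rk m"
  let ?lin = "\<lambda>a. \<Sum>i<?n. of_int (a i) * x i"
  have "of_int s * bil m x x + ?lin g * ?lin l + ?lin l * ?lin g
          = (\<Sum>i<?n. \<Sum>j<?n. of_int (s * gentry m i j + g i * l j + l i * g j) * x i * x j)"
    unfolding bil_def sum_rank_one_quadratic[symmetric]
    by (simp add: sum_distrib_left sum.distrib[symmetric] algebra_simps)
  also have "\<dots> = (\<Sum>i<?n. \<Sum>j<?n. of_int (\<Sum>(w, c)\<leftarrow>sq. w * ventry c i * ventry c j) * x i * x j)"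
    by (intro sum.cong refl) (simp add: sos)
  also have "\<dots> = (\<Sum>(w, c)\<leftarrow>sq. of_int w * (?lin (ventry c))\<^sup>2)"
    by (rule sum_squares_quadratic)
  also have "\<dots> \<ge> 0"
    using assms(2) by (induction sq) auto
  finally show ?thesis
    using assms(1) perp by (simp add: zero_le_mult_iff)
qed

lemma discriminant_le_if_nonneg:
  fixes a b c :: real
  assumes nonneg: "\<And>t. 0 \<le> a - 2 * t * b + t\<^sup>2 * c" and "0 \<le> c"
  shows "b\<^sup>2 \<le> a * c"
proof (cases "c = 0")
  case True
  have "b = 0"
  proof (rule ccontr)
    assume "b \<noteq> 0"
    then have "a - 2 * ((a + 1) / (2 * b)) * b = -1"
      by (simp add: field_simps)
    then show False
      using nonneg[of "(a + 1) / (2 * b)"] True by simp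
  qed
  then show ?thesis
    using True by simp
next
  case False
  then have "0 < c"
    using assms(2) by simp
  have "0 \<le> a - 2 * (b / c) * b + (b / c)\<^sup>2 * c"
    by (rule nonneg)
  also have "\<dots> = a - b\<^sup>2 / c"
    using \<open>0 < c\<close> by (simp add: field_simps power2_eq_square)
  finally show ?thesis
    using \<open>0 < c\<close> by (simp add: field_simps)
qed

lemma cauchy_schwarz_on_perp:
  assumes sym: "symmetric_gram m" and psd: "\<And>z. bil m z e = 0 \<Longrightarrow> 0 \<le> bil m z z"
    and x: "bil m x e = 0" and y: "bil m y e = 0"
  shows "(bil m x y)\<^sup>2 \<le> bil m x x * bil m y y"
proof (rule discriminant_le_if_nonneg)
  show "0 \<le> bil m y y"
    using psd y .
next
  fix t
  let ?z = "\<lambda>i. x i - t * y i"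
  have "0 \<le> bil m ?z ?z"
    using x y by (intro psd) (simp add: bil_diff_left bil_mult_left)
  also have "bil m ?z ?z = bil m x x - 2 * t * bil m x y + t\<^sup>2 * bil m y y"
    using bil_commute[OF sym, of y x]
    by (simp add: bil_diff_left bil_diff_right bil_mult_left bil_mult_right power2_eq_square algebra_simps)
  finally show "0 \<le> bil m x x - 2 * t * bil m x y + t\<^sup>2 * bil m y y" .
qed

section \<open>Vectors avoiding all mirrors\<close>

text \<open>Apply positivity to \<open>(h\<cdot>e) r - (r\<cdot>e) h \<in> e\<^sup>\<bottom>\<close>.\<close>
lemma root_perp_if_nearly_perp:
  assumes sym: "symmetric_gram m" and psd: "\<And>z. bil m z e = 0 \<Longrightarrow> 0 \<le> bil m z z"
    and r6: "bil m r r \<le> 6" and rh: "bil m r h = 0" and hh: "bil m h h < 0"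
    and he: "6 * (bil m h e)\<^sup>2 < - bil m h h" and re_Ints: "bil m r e \<in> \<int>"
  shows "bil m r e = 0"
proof -
  let ?x = "\<lambda>i. bil m h e * r i - bil m r e * h i"
  have "0 \<le> bil m ?x ?x"
    by (intro psd) (simp add: bil_diff_left bil_mult_left)
  also have "bil m ?x ?x = (bil m h e)\<^sup>2 * bil m r r + (bil m r e)\<^sup>2 * bil m h h"
    using rh bil_commute[OF sym, of h r]
    by (simp only: bil_diff_left bil_diff_right bil_mult_left bil_mult_right)
      (simp add: power2_eq_square algebra_simps)
  finally have "(bil m r e)\<^sup>2 * (- bil m h h) \<le> (bil m h e)\<^sup>2 * bil m r r"
    by simp
  also have "\<dots> \<le> (bil m h e)\<^sup>2 * 6"
    using r6 by (intro mult_left_mono) auto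
  also have "\<dots> < 1 * (- bil m h h)"
    using he by simp
  finally have "\<bar>bil m r e\<bar> < 1"
    using hh by (simp add: mult_less_cancel_right abs_square_less_1)
  then show ?thesis
    using re_Ints Ints_nonzero_abs_less1 by blast
qed

lemma root_pairing_bound:
  fixes B :: int
  assumes sym: "symmetric_gram m" and psd: "\<And>z. bil m z e = 0 \<Longrightarrow> 0 \<le> bil m z z"
    and re: "bil m r e = 0" and ve: "bil m v e = 0" and r6: "bil m r r \<le> 6"
    and v_small: "6 * bil m v v < (of_int B + 1)\<^sup>2" and "0 \<le> B" and rv_Ints: "bil m r v \<in> \<int>"
  shows "\<bar>bil m r v\<bar> \<le> of_int B"
proof -
  have "(bil m r v)\<^sup>2 \<le> bil m r r * bil m v v"
    by (rule cauchy_schwarz_on_perp[OF sym psd re ve])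
  also have "\<dots> \<le> 6 * bil m v v"
    using r6 psd[OF ve] by (intro mult_right_mono) auto
  also have "\<dots> < (of_int B + 1)\<^sup>2"
    by (rule v_small)
  finally have "\<bar>bil m r v\<bar> < of_int B + 1"
    using \<open>0 \<le> B\<close> by (simp add: power2_less_imp_less abs_le_square_iff[symmetric]) 
  moreover obtain z where "\<bar>bil m r v\<bar> = of_int z"
    using rv_Ints by (metis Ints_abs Ints_cases)
  ultimately show ?thesis
    by simp
qed

lemma base_digits_eq_zero:
  fixes c :: "nat \<Rightarrow> int"
  assumes "\<And>i. i < k \<Longrightarrow> \<bar>c i\<bar> \<le> B" and "2 * B < T"
    and "T ^ k * p + (\<Sum>i<k. T ^ i * c i) = 0"
  shows "p = 0 \<and> (\<forall>i<k. c i = 0)"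
  using assms
proof (induction k arbitrary: c)
  case 0
  then show ?case by simp
next
  case (Suc k)
  have "0 \<le> B"
    using Suc.prems(1)[of 0] by simp
  then have "0 < T"
    using Suc.prems(2) by simp
  define R where "R = T ^ k * p + (\<Sum>i<k. T ^ i * c (Suc i))"
  have "c 0 + T * R = 0"
    using Suc.prems(3) unfolding R_def sum.lessThan_Suc_shift
    by (simp add: sum_distrib_left algebra_simps)
  have "R = 0"
  proof (rule ccontr)
    assume "R \<noteq> 0"
    then have "T \<le> \<bar>T * R\<bar>"
      using \<open>0 < T\<close> by (simp add: abs_mult mult_le_cancel_left1)
    also have "\<bar>T * R\<bar> = \<bar>c 0\<bar>"
      using \<open>c 0 + T * R = 0\<close> by (simp add: eq_neg_iff_add_eq_0[symmetric])
    finally show False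
      using Suc.prems(1)[of 0] Suc.prems(2) \<open>0 \<le> B\<close> by simp
  qed
  then have "c 0 = 0"
    using \<open>c 0 + T * R = 0\<close> by simp
  moreover have "p = 0 \<and> (\<forall>i<k. c (Suc i) = 0)"
    using Suc.IH[of "\<lambda>i. c (Suc i)"] Suc.prems(1,2) \<open>R = 0\<close> unfolding R_def by simp
  ultimately show ?case
    by (auto simp: less_Suc_eq_0_disj)
qed

text \<open>Read \<open>ident\<close> as the matrix identity \<open>d 1 = d \<Sum>\<^sub>a K\<^sub>a C\<^sub>a\<^sup>T + Y (G V)\<^sup>T\<close>,
  whose last term vanishes on \<open>V\<^sup>\<bottom>\<close>.\<close>
lemma perp_expansion_if:
  fixes K C Y V :: "int list list" and d :: int
  assumes "d \<noteq> 0"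
    and ident: "\<And>j l. j < rk m \<Longrightarrow> l < rk m \<Longrightarrow>
      d * (if j = l then 1 else 0) = d * (\<Sum>a<length K. ventry (K ! a) j * ventry (C ! a) l)
        + (\<Sum>c<length V. ventry (Y ! j) c * ventry (list_mat_vec (rk m) m (V ! c)) l)"
    and perp: "\<And>c. c < length V \<Longrightarrow> bil m x (real_vec (V ! c)) = 0"
    and "j < rk m"
  shows "x j = (\<Sum>a<length K. (\<Sum>l<rk m. of_int (ventry (C ! a) l) * x l) * real_vec (K ! a) j)"
proof -
  let ?n = "rk m"
  let ?lin = "\<lambda>v. \<Sum>l<?n. of_int (ventry v l) * x l"
  let ?KC = "\<lambda>l. \<Sum>a<length K. ventry (K ! a) j * ventry (C ! a) l"
  let ?YV = "\<lambda>l. \<Sum>c<length V. ventry (Y ! j) c * ventry (list_mat_vec ?n m (V ! c)) l"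
  have delta: "(if l = j then of_int d * x l else 0) = of_int (d * ?KC l + ?YV l) * x l" if "l < ?n" for l
    by (simp only: ident[OF \<open>j < ?n\<close> that, symmetric]) auto
  have "of_int d * x j = (\<Sum>l<?n. if l = j then of_int d * x l else 0)"
    using \<open>j < ?n\<close> by simp
  also have "\<dots> = (\<Sum>l<?n. of_int (d * ?KC l + ?YV l) * x l)"
    using delta by (intro sum.cong refl) simp
  also have "\<dots> = of_int d * (\<Sum>l<?n. of_int (?KC l) * x l) + (\<Sum>l<?n. of_int (?YV l) * x l)"
    by (simp only: of_int_add of_int_mult distrib_right sum.distrib mult.assoc
        sum_distrib_left[of "of_int d :: real"])
  also have "\<dots> = of_int d * (\<Sum>a<length K. of_int (ventry (K ! a) j) * ?lin (C ! a))
        + (\<Sum>c<length V. of_int (ventry (Y ! j) c) * ?lin (list_mat_vec ?n m (V ! c)))"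
    by (simp only: sum_mat_mult_vec)
  also have "\<dots> = of_int d * (\<Sum>a<length K. of_int (ventry (K ! a) j) * ?lin (C ! a))"
    using perp by (simp add: bil_real_vec_right)
  finally show ?thesis
    using \<open>d \<noteq> 0\<close> by (simp add: real_vec_def mult.commute)
qed

lemma bil_self_div4_Ints_if:
  fixes K U :: "int list list"
  assumes gramK: "\<And>a b. a < length K \<Longrightarrow> b < length K \<Longrightarrow>
                    int_form m (K ! a) (K ! b) = 2 * (ventry (U ! a) b + ventry (U ! b) a)"
    and x: "\<And>j. j < rk m \<Longrightarrow> x j = (\<Sum>a<length K. w a * real_vec (K ! a) j)"
    and w: "\<And>a. w a \<in> \<int>"
  shows "bil m x x / 4 \<in> \<int>"
proof -
  let ?k = "length K"
  let ?S = "\<Sum>a<?k. \<Sum>b<?k. of_int (ventry (U ! a) b) * w a * w b"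
  have "bil m x x = bil m (\<lambda>j. \<Sum>a<?k. w a * real_vec (K ! a) j) (\<lambda>j. \<Sum>a<?k. w a * real_vec (K ! a) j)"
    using x by (intro bil_cong) auto
  also have "\<dots> = (\<Sum>a<?k. w a * (\<Sum>b<?k. w b * bil m (real_vec (K ! a)) (real_vec (K ! b))))"
    unfolding bil_sum_left bil_sum_right ..
  also have "\<dots> = (\<Sum>a<?k. \<Sum>b<?k. 2 * (of_int (ventry (U ! a) b) * w a * w b))
                  + (\<Sum>a<?k. \<Sum>b<?k. 2 * (of_int (ventry (U ! b) a) * w a * w b))"
    by (simp add: bil_real_vec gramK sum_distrib_left sum.distrib[symmetric] algebra_simps)
  also have "(\<Sum>a<?k. \<Sum>b<?k. 2 * (of_int (ventry (U ! b) a) * w a * w b))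
               = (\<Sum>a<?k. \<Sum>b<?k. 2 * (of_int (ventry (U ! a) b) * w a * w b))"
    by (subst sum.swap) (simp add: mult.commute mult.left_commute)
  finally have "bil m x x / 4 = ?S"
    by (simp add: sum_distrib_left[symmetric])
  then show ?thesis
    using w by (simp add: Ints_sum Ints_mult)
qed

text \<open>A root \<open>r \<bottom> h\<close> is first orthogonal to \<open>e\<close>; then its pairings with the digit
  vectors are the digits of a base-\<open>T\<close> expansion of \<open>0\<close>, hence vanish, so \<open>r\<close> lies in
  an orthogonal complement where all norms are divisible by 4.\<close>
lemma not_in_mirrors_if:
  fixes e p :: "int list" and bs :: "int list list" and T B c :: int
  assumes sym: "symmetric_gram m"
    and psd: "\<And>x. bil m x (real_vec e) = 0 \<Longrightarrow> 0 \<le> bil m x x"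
    and h_neg: "bil m h h < 0"
    and h_e: "6 * (bil m h (real_vec e))\<^sup>2 < - bil m h h"
    and h_exp: "\<And>x. bil m x h = of_int (T ^ length bs) * bil m x (real_vec p)
                  + (\<Sum>i<length bs. of_int (T ^ i) * bil m x (real_vec (bs ! i)))
                  + of_int c * bil m x (real_vec e)"
    and bs_e: "\<And>v. v \<in> set bs \<Longrightarrow> bil m (real_vec v) (real_vec e) = 0"
    and bs_small: "\<And>v. v \<in> set bs \<Longrightarrow> 6 * bil m (real_vec v) (real_vec v) < (of_int B + 1)\<^sup>2"
    and "0 \<le> B" and "2 * B < T"
    and perp_norm: "\<And>r. r \<in> latt m \<Longrightarrow> (\<And>v. v \<in> set (e # p # bs) \<Longrightarrow> bil m r (real_vec v) = 0)
                      \<Longrightarrow> bil m r r / 4 \<in> \<int>"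
  shows "h \<notin> mirrors m"
proof
  assume "h \<in> mirrors m"
  then obtain r where "root2 m r \<or> root6 m r" and "bil m h r = 0"
    unfolding mirrors_def by auto
  then have r: "r \<in> latt m" and rr: "bil m r r = 2 \<or> bil m r r = 6" and rh: "bil m r h = 0"
    using bil_commute[OF sym, of h r] by (auto simp: root2_def root6_def)
  have r_Ints: "bil m r (real_vec v) \<in> \<int>" for v
    using r by (intro bil_Ints) (auto simp: latt_def real_vec_def)
  have r6: "bil m r r \<le> 6"
    using rr by auto
  have re: "bil m r (real_vec e) = 0"
    by (rule root_perp_if_nearly_perp[OF sym psd r6 rh h_neg h_e r_Ints])
  define d where "d v = \<lfloor>bil m r (real_vec v)\<rfloor>" for v
  have d: "of_int (d v) = bil m r (real_vec v)" for v
    unfolding d_def using r_Ints by (rule of_int_floor)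
  have "\<bar>d (bs ! i)\<bar> \<le> B" if "i < length bs" for i
  proof -
    have "\<bar>bil m r (real_vec (bs ! i))\<bar> \<le> of_int B"
      using that by (intro root_pairing_bound[OF sym psd re _ r6 _ \<open>0 \<le> B\<close> r_Ints] bs_e bs_small) simp_all
    then show ?thesis
      by (simp flip: d)
  qed
  moreover have "T ^ length bs * d p + (\<Sum>i<length bs. T ^ i * d (bs ! i)) = 0"
  proof -
    have "of_int (T ^ length bs * d p + (\<Sum>i<length bs. T ^ i * d (bs ! i))) = (0::real)"
      using h_exp[of r] rh re by (simp add: d)
    then show ?thesis
      by (simp only: of_int_eq_0_iff)
  qed
  ultimately have "d p = 0 \<and> (\<forall>i<length bs. d (bs ! i) = 0)"
    using \<open>2 * B < T\<close> by (intro base_digits_eq_zero[where c = "\<lambda>i. d (bs ! i)"]) simp_all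
  then have "bil m r (real_vec v) = 0" if "v \<in> set (e # p # bs)" for v
    using that re by (auto simp flip: d simp: in_set_conv_nth)
  then have "bil m r r / 4 \<in> \<int>"
    by (rule perp_norm[OF r])
  then obtain z :: int where "bil m r r / 4 = of_int z"
    by (rule Ints_cases)
  then have "real_of_int (4 * z) = real_of_int 2 \<or> real_of_int (4 * z) = real_of_int 6"
    using rr by simp
  then have "4 * z = 2 \<or> 4 * z = 6"
    by (simp only: of_int_eq_iff)
  then show False
    by presburger
qed

definition involution_cert :: "gram \<Rightarrow> int list list \<Rightarrow> bool" where
  "involution_cert m M \<longleftrightarrow>
     list_mat_mult (rk m) (list_mat_transp (rk m) M) (list_mat_mult (rk m) m M) = list_mat (rk m) (gentry m) \<and>
     list_mat_mult (rk m) M M = list_mat (rk m) (\<lambda>i j. if i = j then 1 else 0)"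

lemma isometric_involution_if_cert:
  assumes "involution_cert m M"
  shows "isometric_involution m (gentry M)"
proof
  show "bil m (mapp m (gentry M) x) (mapp m (gentry M) y) = bil m x y" for x y
    using assms by (intro bil_mapp_eq_if)
      (auto simp: involution_cert_def list_mat_eq_iff list_mat_mult_def list_mat_transp_def gentry_list_mat)
  show "mapp m (gentry M) (mapp m (gentry M) x) = x" if "x \<in> vspace m" for x
    using assms that by (intro mapp_mapp_if) (auto simp: involution_cert_def list_mat_eq_iff list_mat_mult_def gentry_list_mat)
qed

definition z3_reversing_cert ::
    "gram \<Rightarrow> int list list \<Rightarrow> int list list \<Rightarrow> int list list \<Rightarrow> int list list \<Rightarrow> bool" where
  "z3_reversing_cert m M D P Q \<longleftrightarrow>
     list_mat_mult (rk m) D m = list_mat (rk m) (\<lambda>i j. if i = j then 6 else 0) \<and>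
     list_mat (rk m) (\<lambda>i j. gentry M i j + (if i = j then 1 else 0))
       = list_mat (rk m) (\<lambda>i j. gentry (list_mat_mult (rk m) P m) i j + 3 * gentry Q i j)"

lemma z3_reversing_if_cert:
  assumes "symmetric_gram m" and "z3_reversing_cert m M D P Q"
  shows "z3_reversing m (gentry M)"
  using assms(2)
  by (intro z3_reversing_if[OF assms(1), where D = "gentry D" and P = "gentry P" and Q = "gentry Q"])
    (auto simp: z3_reversing_cert_def list_mat_eq_iff list_mat_mult_def gentry_list_mat)

definition perp_psd_cert :: "gram \<Rightarrow> int list \<Rightarrow> int \<Rightarrow> int list \<Rightarrow> (int \<times> int list) list \<Rightarrow> bool" where
  "perp_psd_cert m e s l sq \<longleftrightarrow> 0 < s \<and> (\<forall>(w, v) \<in> set sq. 0 \<le> w) \<and>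
     list_mat (rk m) (\<lambda>i j. s * gentry m i j + ventry (list_mat_vec (rk m) m e) i * ventry l j
                        + ventry l i * ventry (list_mat_vec (rk m) m e) j)
       = list_mat (rk m) (\<lambda>i j. \<Sum>(w, v)\<leftarrow>sq. w * ventry v i * ventry v j)"

lemma bil_nonneg_on_perp_if_cert:
  assumes "perp_psd_cert m e s l sq" and "bil m x (real_vec e) = 0"
  shows "0 \<le> bil m x x"
  using assms
  by (intro bil_nonneg_on_perp_if[where s = s and g = "ventry (list_mat_vec (rk m) m e)" and l = "ventry l" and sq = sq])
    (auto simp: perp_psd_cert_def list_mat_eq_iff gentry_list_mat bil_real_vec_right)

definition perp_span_cert :: "gram \<Rightarrow> int list list \<Rightarrow> int list list \<Rightarrow> int list list \<Rightarrow> int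
    \<Rightarrow> int list list \<Rightarrow> int list list \<Rightarrow> bool" where
  "perp_span_cert m V K C d Y U \<longleftrightarrow> d \<noteq> 0 \<and>
     list_mat (rk m) (\<lambda>j l. d * (if j = l then 1 else 0))
       = list_mat (rk m) (\<lambda>j l. d * (\<Sum>a<length K. ventry (K ! a) j * ventry (C ! a) l)
                          + (\<Sum>i<length V. ventry (Y ! j) i * ventry (map (list_mat_vec (rk m) m) V ! i) l)) \<and>
     list_mat (length K) (\<lambda>a b. int_form m (K ! a) (K ! b))
       = list_mat (length K) (\<lambda>a b. 2 * (ventry (U ! a) b + ventry (U ! b) a))"

lemma bil_self_div4_Ints_if_cert:
  assumes cert: "perp_span_cert m V K C d Y U" and r: "r \<in> latt m"
    and perp: "\<And>v. v \<in> set V \<Longrightarrow> bil m r (real_vec v) = 0"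
  shows "bil m r r / 4 \<in> \<int>"
proof (rule bil_self_div4_Ints_if)
  show "int_form m (K ! a) (K ! b) = 2 * (ventry (U ! a) b + ventry (U ! b) a)"
    if "a < length K" "b < length K" for a b
    using cert that by (auto simp: perp_span_cert_def list_mat_eq_iff)
  show "r j = (\<Sum>a<length K. (\<Sum>l<rk m. of_int (ventry (C ! a) l) * r l) * real_vec (K ! a) j)"
    if "j < rk m" for j
    using cert perp that by (intro perp_expansion_if[where d = d and Y = Y and V = V])
      (auto simp: perp_span_cert_def list_mat_eq_iff)
  show "(\<Sum>l<rk m. of_int (ventry (C ! a) l) * r l) \<in> \<int>" for a
    using r by (auto simp: latt_def intro!: Ints_sum Ints_mult)
qed

definition expansion_vec :: "nat \<Rightarrow> int \<Rightarrow> int list \<Rightarrow> int list list \<Rightarrow> int \<Rightarrow> int list \<Rightarrow> int list" where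
  "expansion_vec n T p bs c e =
     map (\<lambda>j. T ^ length bs * ventry p j + (\<Sum>i<length bs. T ^ i * ventry (bs ! i) j) + c * ventry e j) [0..<n]"

lemma ventry_expansion_vec:
  "j < n \<Longrightarrow> ventry (expansion_vec n T p bs c e) j
     = T ^ length bs * ventry p j + (\<Sum>i<length bs. T ^ i * ventry (bs ! i) j) + c * ventry e j"
  by (simp add: expansion_vec_def ventry_def[of "map _ _"])

lemma bil_expansion_vec:
  "bil m x (real_vec (expansion_vec (rk m) T p bs c e))
     = of_int (T ^ length bs) * bil m x (real_vec p)
       + (\<Sum>i<length bs. of_int (T ^ i) * bil m x (real_vec (bs ! i)))
       + of_int c * bil m x (real_vec e)"
proof -
  have "bil m x (real_vec (expansion_vec (rk m) T p bs c e))
          = bil m x (\<lambda>j. of_int (T ^ length bs) * real_vec p j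
              + (\<Sum>i<length bs. of_int (T ^ i) * real_vec (bs ! i) j) + of_int c * real_vec e j)"
    by (rule bil_cong) (simp_all add: real_vec_def ventry_expansion_vec)
  then show ?thesis
    by (simp only: bil_add_right bil_mult_right bil_sum_right)
qed

lemma mapp_real_vec_if:
  assumes "list_mat_vec (rk m) M v = v"
  shows "mapp m (gentry M) (real_vec v) = real_vec v"
proof
  fix j
  show "mapp m (gentry M) (real_vec v) j = real_vec v j"
  proof (cases "j < rk m")
    case True
    then have "mapp m (gentry M) (real_vec v) j = of_int (ventry (list_mat_vec (rk m) M v) j)"
      by (simp add: mapp_def real_vec_def ventry_list_mat_vec)
    then show ?thesis
      by (simp add: assms real_vec_def)
  next
    case False
    have "length v = rk m"
      using arg_cong[OF assms, of length] by (simp add: list_mat_vec_def)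
    then show ?thesis
      using False by (simp add: mapp_def real_vec_def ventry_def)
  qed
qed

text \<open>\<open>six_inv_gram\<close> is \<open>6 G\<^sup>-\<^sup>1\<close> and \<open>inv_mat + 1 = rev_lin G + 3 rev_rem\<close>. The Gram
  matrix of \<open>perp_basis\<close> is \<open>2 (U + U\<^sup>T)\<close> for \<open>U = perp_quarter_norm\<close>, so norms on its
  integral span are divisible by 4.\<close>
record achirality_cert =
  inv_mat :: "int list list"
  six_inv_gram :: "int list list"
  rev_lin :: "int list list"
  rev_rem :: "int list list"
  pos_vec :: "int list"
  psd_scale :: int
  psd_lin :: "int list"
  psd_squares :: "(int \<times> int list) list"
  exp_base :: int
  exp_bound :: int
  exp_lead :: "int list"
  exp_digits :: "int list list"
  exp_coeff :: int
  perp_basis :: "int list list"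
  perp_coords :: "int list list"
  perp_den :: int
  perp_corr :: "int list list"
  perp_quarter_norm :: "int list list"

definition fixed_vec :: "gram \<Rightarrow> achirality_cert \<Rightarrow> int list" where
  "fixed_vec m c = expansion_vec (rk m) (exp_base c) (exp_lead c) (exp_digits c) (exp_coeff c) (pos_vec c)"

definition valid_cert :: "gram \<Rightarrow> achirality_cert \<Rightarrow> bool" where
  "valid_cert m c \<longleftrightarrow>
     list_mat (rk m) (\<lambda>i j. gentry m j i) = list_mat (rk m) (gentry m) \<and>
     involution_cert m (inv_mat c) \<and>
     z3_reversing_cert m (inv_mat c) (six_inv_gram c) (rev_lin c) (rev_rem c) \<and>
     list_mat_vec (rk m) (inv_mat c) (fixed_vec m c) = fixed_vec m c \<and>
     int_form m (fixed_vec m c) (fixed_vec m c) < 0 \<and>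
     6 * (int_form m (fixed_vec m c) (pos_vec c))\<^sup>2 < - int_form m (fixed_vec m c) (fixed_vec m c) \<and>
     perp_psd_cert m (pos_vec c) (psd_scale c) (psd_lin c) (psd_squares c) \<and>
     (\<forall>v \<in> set (exp_digits c). int_form m v (pos_vec c) = 0 \<and> 6 * int_form m v v < (exp_bound c + 1)\<^sup>2) \<and>
     0 \<le> exp_bound c \<and> 2 * exp_bound c < exp_base c \<and>
     perp_span_cert m (pos_vec c # exp_lead c # exp_digits c)
       (perp_basis c) (perp_coords c) (perp_den c) (perp_corr c) (perp_quarter_norm c)"

lemma achiral_if_valid_cert:
  assumes "valid_cert m c"
  shows "achiral m"
proof -
  let ?h = "real_vec (fixed_vec m c)" and ?e = "real_vec (pos_vec c)"
  have sym: "symmetric_gram m"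
    using assms by (auto simp: valid_cert_def symmetric_gram_def list_mat_eq_iff)
  interpret isometric_involution m "gentry (inv_mat c)"
    using assms by (simp add: valid_cert_def isometric_involution_if_cert)
  have "?h \<notin> mirrors m"
  proof (rule not_in_mirrors_if[OF sym, where T = "exp_base c" and B = "exp_bound c" and p = "exp_lead c"
        and bs = "exp_digits c" and c = "exp_coeff c"])
    show "\<And>x. bil m x ?e = 0 \<Longrightarrow> 0 \<le> bil m x x"
      using assms by (auto simp: valid_cert_def intro: bil_nonneg_on_perp_if_cert)
    show "\<And>x. bil m x ?h = of_int (exp_base c ^ length (exp_digits c)) * bil m x (real_vec (exp_lead c))
            + (\<Sum>i<length (exp_digits c). of_int (exp_base c ^ i) * bil m x (real_vec (exp_digits c ! i)))
            + of_int (exp_coeff c) * bil m x ?e"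
      unfolding fixed_vec_def by (rule bil_expansion_vec)
    show "\<And>r. r \<in> latt m \<Longrightarrow> (\<And>v. v \<in> set (pos_vec c # exp_lead c # exp_digits c) \<Longrightarrow> bil m r (real_vec v) = 0)
            \<Longrightarrow> bil m r r / 4 \<in> \<int>"
      using assms by (auto simp: valid_cert_def intro: bil_self_div4_Ints_if_cert)
    show "6 * bil m (real_vec v) (real_vec v) < (of_int (exp_bound c) + 1)\<^sup>2" if "v \<in> set (exp_digits c)" for v
    proof -
      have "6 * int_form m v v < (exp_bound c + 1)\<^sup>2"
        using assms that by (simp add: valid_cert_def)
      then have "real_of_int (6 * int_form m v v) < real_of_int ((exp_bound c + 1)\<^sup>2)"
        by (simp only: of_int_less_iff)
      then show ?thesis
        by (simp add: bil_real_vec)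
    qed
  qed (use assms in \<open>auto simp: valid_cert_def bil_real_vec simp flip: of_int_power\<close>)
  moreover have "?h \<in> hcone m"
    using assms by (simp add: hcone_def bil_real_vec valid_cert_def real_vec_vspace fixed_vec_def expansion_vec_def)
  moreover have "mapp m (gentry (inv_mat c)) ?h = ?h"
    using assms by (simp add: valid_cert_def mapp_real_vec_if)
  ultimately show ?thesis
    using assms sym by (intro achiral_if_fixes z3_reversing_if_cert) (auto simp: valid_cert_def)
qed

definition cert_2D4 :: achirality_cert where
  "cert_2D4 = \<lparr>
    inv_mat =
      [[3, -4, 3, -3, 2, -3, 2, 2, 0, 0, 0, 0],
       [-4, 3, -3, 3, -2, 3, -2, -2, 0, 0, 0, 0],
       [-2, 2, -2, 2, -1, 1, -1, -1, 0, 0, 0, 0],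
       [2, -2, 2, -2, 1, -2, 1, 1, 0, 0, 0, 0],
       [-2, 2, -2, 1, -2, 2, -1, -1, 0, 0, 0, 0],
       [0, 0, -1, -1, 0, 0, 0, 0, 0, 0, 0, 0],
       [-2, 2, -2, 1, -1, 2, -2, -1, 0, 0, 0, 0],
       [-2, 2, -2, 1, -1, 2, -1, -2, 0, 0, 0, 0],
       [0, 0, 0, 0, 0, 0, 0, 0, 1, 0, 0, 0],
       [0, 0, 0, 0, 0, 0, 0, 0, 0, 1, 0, 0],
       [0, 0, 0, 0, 0, 0, 0, 0, 0, 0, 1, 0],
       [0, 0, 0, 0, 0, 0, 0, 0, 0, 0, 0, 1]],
    six_inv_gram =
      [[0, 3, 0, 0, 0, 0, 0, 0, 0, 0, 0, 0],
       [3, 0, 0, 0, 0, 0, 0, 0, 0, 0, 0, 0],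
       [0, 0, 4, 2, 0, 0, 0, 0, 0, 0, 0, 0],
       [0, 0, 2, 4, 0, 0, 0, 0, 0, 0, 0, 0],
       [0, 0, 0, 0, 6, 6, 3, 3, 0, 0, 0, 0],
       [0, 0, 0, 0, 6, 12, 6, 6, 0, 0, 0, 0],
       [0, 0, 0, 0, 3, 6, 6, 3, 0, 0, 0, 0],
       [0, 0, 0, 0, 3, 6, 3, 6, 0, 0, 0, 0],
       [0, 0, 0, 0, 0, 0, 0, 0, 6, 6, 3, 3],
       [0, 0, 0, 0, 0, 0, 0, 0, 6, 12, 6, 6],
       [0, 0, 0, 0, 0, 0, 0, 0, 3, 6, 6, 3],
       [0, 0, 0, 0, 0, 0, 0, 0, 3, 6, 3, 6]],
    rev_lin =
      [[1, 2, 0, 0, 1, 0, 1, 1, 0, 0, 0, 0],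
       [2, 1, 0, 0, 2, 0, 2, 2, 0, 0, 0, 0],
       [1, 2, 1, 0, 2, 2, 2, 2, 0, 0, 0, 0],
       [2, 1, 1, 0, 0, 2, 0, 0, 0, 0, 0, 0],
       [1, 2, 2, 0, 0, 1, 0, 0, 0, 0, 0, 0],
       [0, 0, 1, 0, 1, 2, 1, 1, 0, 0, 0, 0],
       [1, 2, 2, 0, 0, 1, 0, 0, 0, 0, 0, 0],
       [1, 2, 2, 0, 0, 1, 0, 0, 0, 0, 0, 0],
       [0, 0, 0, 0, 0, 0, 0, 0, 2, 2, 1, 1],
       [0, 0, 0, 0, 0, 0, 0, 0, 2, 1, 2, 2],
       [0, 0, 0, 0, 0, 0, 0, 0, 1, 2, 2, 1],
       [0, 0, 0, 0, 0, 0, 0, 0, 1, 2, 1, 2]],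
    rev_rem =
      [[0, -2, 1, -1, 0, 0, 0, 0, 0, 0, 0, 0],
       [-2, 0, -1, 1, -2, 3, -2, -2, 0, 0, 0, 0],
       [-2, 0, -1, 1, -1, 1, -1, -1, 0, 0, 0, 0],
       [0, -2, 0, 0, 1, -2, 1, 1, 0, 0, 0, 0],
       [-2, 0, -2, 1, 0, 0, 0, 0, 0, 0, 0, 0],
       [0, 0, -1, 0, 0, 0, 0, 0, 0, 0, 0, 0],
       [-2, 0, -2, 1, 0, 0, 0, 0, 0, 0, 0, 0],
       [-2, 0, -2, 1, 0, 0, 0, 0, 0, 0, 0, 0],
       [0, 0, 0, 0, 0, 0, 0, 0, 0, 0, 0, 0],
       [0, 0, 0, 0, 0, 0, 0, 0, -1, 2, -1, -1],
       [0, 0, 0, 0, 0, 0, 0, 0, 0, 0, 0, 0],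
       [0, 0, 0, 0, 0, 0, 0, 0, 0, 0, 0, 0]],
    pos_vec = [1, -1, -1, 0, 0, 1, 0, 0, 0, 0, 0, 0],
    psd_scale = 330,
    psd_lin = [-990, 990, -660, -165, -495, 990, -495, -495, 0, 0, 0, 0],
    psd_squares =
      [(110, [6, -5, 5, -1, 3, -6, 3, 3, 0, 0, 0, 0]),
       (10, [0, 11, -5, 1, -3, 6, -3, -3, 0, 0, 0, 0]),
       (3, [0, 0, 10, -2, -5, 10, -5, -5, 0, 0, 0, 0]),
       (198, [0, 0, 0, 1, 0, 0, 0, 0, 0, 0, 0, 0]),
       (55, [0, 0, 0, 0, 3, 0, -1, -1, 0, 0, 0, 0]),
       (110, [0, 0, 0, 0, 0, 0, 2, -1, 0, 0, 0, 0]),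
       (330, [0, 0, 0, 0, 0, 0, 0, 1, 0, 0, 0, 0]),
       (165, [0, 0, 0, 0, 0, 0, 0, 0, 2, -1, 0, 0]),
       (55, [0, 0, 0, 0, 0, 0, 0, 0, 0, 3, -2, -2]),
       (110, [0, 0, 0, 0, 0, 0, 0, 0, 0, 0, 2, -1]),
       (330, [0, 0, 0, 0, 0, 0, 0, 0, 0, 0, 0, 1])],
    exp_base = 7,
    exp_bound = 3,
    exp_lead = [-2, 2, 1, -1, 1, 0, 1, 1, 0, 0, 0, 0],
    exp_digits =
      [[0, 0, 0, 0, 0, 0, 0, 0, 1, 0, 0, 0],
       [0, 0, 0, 0, 0, 0, 0, 0, 0, 1, 0, 0],
       [0, 0, 0, 0, 0, 0, 0, 0, 0, 1, 1, 0],
       [0, 0, 0, 0, 0, 0, 0, 0, 0, 1, 0, 1]],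
    exp_coeff = -12031,
    perp_basis =
      [[0, 0, 0, 0, -1, 0, 1, 0, 0, 0, 0, 0],
       [0, 0, 0, 0, -1, 0, 0, 1, 0, 0, 0, 0],
       [1, 0, 0, 0, -1, 0, 0, -1, 0, 0, 0, 0],
       [0, 1, 0, 0, 1, 0, 0, 1, 0, 0, 0, 0],
       [0, 1, 1, 0, 1, 1, 0, 1, 0, 0, 0, 0],
       [1, -1, 0, 1, -1, 1, 0, 0, 0, 0, 0, 0]],
    perp_coords =
      [[0, 0, 0, 0, 0, 0, 1, 0, 0, 0, 0, 0],
       [-1, 1, -1, 0, -1, 1, -1, 0, 0, 0, 0, 0],
       [1, 0, 1, 0, 0, -1, 0, 0, 0, 0, 0, 0],
       [0, 1, -2, 0, 0, 1, 0, 0, 0, 0, 0, 0],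
       [0, 0, 1, 0, 0, 0, 0, 0, 0, 0, 0, 0],
       [0, 0, -1, 0, 0, 1, 0, 0, 0, 0, 0, 0]],
    perp_den = 2,
    perp_corr =
      [[0, 0, 0, 0, 0, 0],
       [0, 0, 0, 0, 0, 0],
       [0, 0, 0, 0, 0, 0],
       [-4, -2, 0, 0, 0, 0],
       [0, 0, 0, 0, 0, 0],
       [0, 0, 0, 0, 0, 0],
       [0, 0, 0, 0, 0, 0],
       [-6, -2, 0, 0, 0, 0],
       [0, 0, 2, 0, 1, 1],
       [0, 0, 2, 0, 2, 2],
       [0, 0, 1, -1, 2, 1],
       [0, 0, 1, -1, 1, 2]],
    perp_quarter_norm =
      [[1, 1, 1, -1, -1, 1],
       [0, 1, 0, 0, 0, 1],
       [0, 0, 1, -1, 0, 1],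
       [0, 0, 0, 1, 1, -1],
       [0, 0, 0, 0, 1, 0],
       [0, 0, 0, 0, 0, 1]]\<rparr>"

lemma valid_cert_2D4: "valid_cert (scale 2 U_lat \<oplus>\<^sub>L A2_lat \<oplus>\<^sub>L D4_lat \<oplus>\<^sub>L D4_lat) cert_2D4"
  by code_simp

definition cert_D4E8 :: achirality_cert where
  "cert_D4E8 = \<lparr>
    inv_mat =
      [[3, -4, 3, -3, 2, -3, 2, 2, 0, 0, 0, 0, 0, 0, 0, 0],
       [-4, 3, -3, 3, -2, 3, -2, -2, 0, 0, 0, 0, 0, 0, 0, 0],
       [-2, 2, -2, 2, -1, 1, -1, -1, 0, 0, 0, 0, 0, 0, 0, 0],
       [2, -2, 2, -2, 1, -2, 1, 1, 0, 0, 0, 0, 0, 0, 0, 0],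
       [-2, 2, -2, 1, -2, 2, -1, -1, 0, 0, 0, 0, 0, 0, 0, 0],
       [0, 0, -1, -1, 0, 0, 0, 0, 0, 0, 0, 0, 0, 0, 0, 0],
       [-2, 2, -2, 1, -1, 2, -2, -1, 0, 0, 0, 0, 0, 0, 0, 0],
       [-2, 2, -2, 1, -1, 2, -1, -2, 0, 0, 0, 0, 0, 0, 0, 0],
       [0, 0, 0, 0, 0, 0, 0, 0, 1, 0, 0, 0, 0, 0, 0, 0],
       [0, 0, 0, 0, 0, 0, 0, 0, 0, 1, 0, 0, 0, 0, 0, 0],
       [0, 0, 0, 0, 0, 0, 0, 0, 0, 0, 1, 0, 0, 0, 0, 0],
       [0, 0, 0, 0, 0, 0, 0, 0, 0, 0, 0, 1, 0, 0, 0, 0],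
       [0, 0, 0, 0, 0, 0, 0, 0, 0, 0, 0, 0, 1, 0, 0, 0],
       [0, 0, 0, 0, 0, 0, 0, 0, 0, 0, 0, 0, 0, 1, 0, 0],
       [0, 0, 0, 0, 0, 0, 0, 0, 0, 0, 0, 0, 0, 0, 1, 0],
       [0, 0, 0, 0, 0, 0, 0, 0, 0, 0, 0, 0, 0, 0, 0, 1]],
    six_inv_gram =
      [[0, 3, 0, 0, 0, 0, 0, 0, 0, 0, 0, 0, 0, 0, 0, 0],
       [3, 0, 0, 0, 0, 0, 0, 0, 0, 0, 0, 0, 0, 0, 0, 0],
       [0, 0, 4, 2, 0, 0, 0, 0, 0, 0, 0, 0, 0, 0, 0, 0],
       [0, 0, 2, 4, 0, 0, 0, 0, 0, 0, 0, 0, 0, 0, 0, 0],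
       [0, 0, 0, 0, 6, 6, 3, 3, 0, 0, 0, 0, 0, 0, 0, 0],
       [0, 0, 0, 0, 6, 12, 6, 6, 0, 0, 0, 0, 0, 0, 0, 0],
       [0, 0, 0, 0, 3, 6, 6, 3, 0, 0, 0, 0, 0, 0, 0, 0],
       [0, 0, 0, 0, 3, 6, 3, 6, 0, 0, 0, 0, 0, 0, 0, 0],
       [0, 0, 0, 0, 0, 0, 0, 0, 24, 30, 42, 60, 48, 36, 24, 12],
       [0, 0, 0, 0, 0, 0, 0, 0, 30, 48, 60, 90, 72, 54, 36, 18],
       [0, 0, 0, 0, 0, 0, 0, 0, 42, 60, 84, 120, 96, 72, 48, 24],
       [0, 0, 0, 0, 0, 0, 0, 0, 60, 90, 120, 180, 144, 108, 72, 36],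
       [0, 0, 0, 0, 0, 0, 0, 0, 48, 72, 96, 144, 120, 90, 60, 30],
       [0, 0, 0, 0, 0, 0, 0, 0, 36, 54, 72, 108, 90, 72, 48, 24],
       [0, 0, 0, 0, 0, 0, 0, 0, 24, 36, 48, 72, 60, 48, 36, 18],
       [0, 0, 0, 0, 0, 0, 0, 0, 12, 18, 24, 36, 30, 24, 18, 12]],
    rev_lin =
      [[1, 2, 0, 0, 1, 0, 1, 1, 0, 0, 0, 0, 0, 0, 0, 0],
       [2, 1, 0, 0, 2, 0, 2, 2, 0, 0, 0, 0, 0, 0, 0, 0],
       [1, 2, 1, 0, 2, 2, 2, 2, 0, 0, 0, 0, 0, 0, 0, 0],
       [2, 1, 1, 0, 0, 2, 0, 0, 0, 0, 0, 0, 0, 0, 0, 0],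
       [1, 2, 2, 0, 0, 1, 0, 0, 0, 0, 0, 0, 0, 0, 0, 0],
       [0, 0, 1, 0, 1, 2, 1, 1, 0, 0, 0, 0, 0, 0, 0, 0],
       [1, 2, 2, 0, 0, 1, 0, 0, 0, 0, 0, 0, 0, 0, 0, 0],
       [1, 2, 2, 0, 0, 1, 0, 0, 0, 0, 0, 0, 0, 0, 0, 0],
       [0, 0, 0, 0, 0, 0, 0, 0, 2, 1, 2, 2, 1, 0, 2, 1],
       [0, 0, 0, 0, 0, 0, 0, 0, 1, 1, 2, 0, 0, 0, 0, 0],
       [0, 0, 0, 0, 0, 0, 0, 0, 2, 2, 1, 1, 2, 0, 1, 2],
       [0, 0, 0, 0, 0, 0, 0, 0, 2, 0, 1, 0, 0, 0, 0, 0],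
       [0, 0, 0, 0, 0, 0, 0, 0, 1, 0, 2, 0, 1, 0, 2, 1],
       [0, 0, 0, 0, 0, 0, 0, 0, 0, 0, 0, 0, 0, 0, 1, 2],
       [0, 0, 0, 0, 0, 0, 0, 0, 2, 0, 1, 0, 2, 1, 0, 0],
       [0, 0, 0, 0, 0, 0, 0, 0, 1, 0, 2, 0, 1, 2, 0, 1]],
    rev_rem =
      [[0, -2, 1, -1, 0, 0, 0, 0, 0, 0, 0, 0, 0, 0, 0, 0],
       [-2, 0, -1, 1, -2, 3, -2, -2, 0, 0, 0, 0, 0, 0, 0, 0],
       [-2, 0, -1, 1, -1, 1, -1, -1, 0, 0, 0, 0, 0, 0, 0, 0],
       [0, -2, 0, 0, 1, -2, 1, 1, 0, 0, 0, 0, 0, 0, 0, 0],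
       [-2, 0, -2, 1, 0, 0, 0, 0, 0, 0, 0, 0, 0, 0, 0, 0],
       [0, 0, -1, 0, 0, 0, 0, 0, 0, 0, 0, 0, 0, 0, 0, 0],
       [-2, 0, -2, 1, 0, 0, 0, 0, 0, 0, 0, 0, 0, 0, 0, 0],
       [-2, 0, -2, 1, 0, 0, 0, 0, 0, 0, 0, 0, 0, 0, 0, 0],
       [0, 0, 0, 0, 0, 0, 0, 0, 0, 0, 0, 0, 0, 1, -1, 0],
       [0, 0, 0, 0, 0, 0, 0, 0, 0, 0, -1, 1, 0, 0, 0, 0],
       [0, 0, 0, 0, 0, 0, 0, 0, -1, -1, 1, 1, -1, 1, 0, -1],
       [0, 0, 0, 0, 0, 0, 0, 0, -1, 0, 0, 1, 0, 0, 0, 0],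
       [0, 0, 0, 0, 0, 0, 0, 0, 0, 0, -1, 1, 0, 1, -1, 0],
       [0, 0, 0, 0, 0, 0, 0, 0, 0, 0, 0, 0, 0, 1, 0, -1],
       [0, 0, 0, 0, 0, 0, 0, 0, -1, 0, 0, 1, -1, 0, 1, 0],
       [0, 0, 0, 0, 0, 0, 0, 0, 0, 0, -1, 1, 0, -1, 1, 0]],
    pos_vec = [1, -1, -1, 0, 0, 1, 0, 0, 0, 0, 0, 0, 0, 0, 0, 0],
    psd_scale = 660,
    psd_lin =
      [-1980, 1980, -1320, -330, -990, 1980, -990, -990, 0, 0, 0, 0, 0, 0, 0, 0],
    psd_squares =
      [(220, [6, -5, 5, -1, 3, -6, 3, 3, 0, 0, 0, 0, 0, 0, 0, 0]),
       (20, [0, 11, -5, 1, -3, 6, -3, -3, 0, 0, 0, 0, 0, 0, 0, 0]),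
       (6, [0, 0, 10, -2, -5, 10, -5, -5, 0, 0, 0, 0, 0, 0, 0, 0]),
       (396, [0, 0, 0, 1, 0, 0, 0, 0, 0, 0, 0, 0, 0, 0, 0, 0]),
       (110, [0, 0, 0, 0, 3, 0, -1, -1, 0, 0, 0, 0, 0, 0, 0, 0]),
       (220, [0, 0, 0, 0, 0, 0, 2, -1, 0, 0, 0, 0, 0, 0, 0, 0]),
       (660, [0, 0, 0, 0, 0, 0, 0, 1, 0, 0, 0, 0, 0, 0, 0, 0]),
       (330, [0, 0, 0, 0, 0, 0, 0, 0, 2, 0, -1, 0, 0, 0, 0, 0]),
       (330, [0, 0, 0, 0, 0, 0, 0, 0, 0, 2, 0, -1, 0, 0, 0, 0]),
       (110, [0, 0, 0, 0, 0, 0, 0, 0, 0, 0, 3, -2, 0, 0, 0, 0]),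
       (22, [0, 0, 0, 0, 0, 0, 0, 0, 0, 0, 0, 5, -6, 0, 0, 0]),
       (33, [0, 0, 0, 0, 0, 0, 0, 0, 0, 0, 0, 0, 4, -5, 0, 0]),
       (55, [0, 0, 0, 0, 0, 0, 0, 0, 0, 0, 0, 0, 0, 3, -4, 0]),
       (110, [0, 0, 0, 0, 0, 0, 0, 0, 0, 0, 0, 0, 0, 0, 2, -3]),
       (330, [0, 0, 0, 0, 0, 0, 0, 0, 0, 0, 0, 0, 0, 0, 0, 1])],
    exp_base = 7,
    exp_bound = 3,
    exp_lead = [-2, 2, 1, -1, 1, 0, 1, 1, 0, 0, 0, 0, 0, 0, 0, 0],
    exp_digits =
      [[0, 0, 0, 0, 0, 0, 0, 0, 1, 0, 0, 0, 0, 0, 0, 0],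
       [0, 0, 0, 0, 0, 0, 0, 0, 0, 1, 0, 0, 0, 0, 0, 0],
       [0, 0, 0, 0, 0, 0, 0, 0, 0, 0, 1, 1, 0, 0, 0, 0],
       [0, 0, 0, 0, 0, 0, 0, 0, 0, 0, 1, 0, 0, 0, 0, 0],
       [0, 0, 0, 0, 0, 0, 0, 0, 0, 0, 1, 1, 1, 0, 0, 0],
       [0, 0, 0, 0, 0, 0, 0, 0, 0, 0, 1, 1, 1, 1, 0, 0],
       [0, 0, 0, 0, 0, 0, 0, 0, 0, 0, 1, 1, 1, 1, 1, 0],
       [0, 0, 0, 0, 0, 0, 0, 0, 2, 2, 3, 5, 4, 3, 2, 1]],
    exp_coeff = -28884235,
    perp_basis =
      [[0, 0, 1, 0, 0, 1, 0, 0, 0, 0, 0, 0, 0, 0, 0, 0],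
       [0, 1, 0, 0, 1, 0, 1, 0, 0, 0, 0, 0, 0, 0, 0, 0],
       [0, 1, 0, 0, 0, 0, 1, 1, 0, 0, 0, 0, 0, 0, 0, 0],
       [0, 1, 0, 0, 1, 0, 0, 1, 0, 0, 0, 0, 0, 0, 0, 0],
       [1, 0, 0, 0, 0, 0, -1, -1, 0, 0, 0, 0, 0, 0, 0, 0],
       [1, -1, -1, 1, 0, 0, 0, -1, 0, 0, 0, 0, 0, 0, 0, 0]],
    perp_coords =
      [[0, 0, 0, 0, 0, 1, 0, 0, 0, 0, 0, 0, 0, 0, 0, 0],
       [1, -1, 2, 0, 1, -2, 1, 0, 0, 0, 0, 0, 0, 0, 0, 0],
       [0, 1, -1, 0, -1, 1, 0, 0, 0, 0, 0, 0, 0, 0, 0, 0],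
       [-1, 1, -2, 0, 0, 2, -1, 0, 0, 0, 0, 0, 0, 0, 0, 0],
       [1, 0, 1, 0, 0, -1, 0, 0, 0, 0, 0, 0, 0, 0, 0, 0],
       [0, 0, -1, 0, 0, 1, 0, 0, 0, 0, 0, 0, 0, 0, 0, 0]],
    perp_den = 1,
    perp_corr =
      [[0, 0, 0, 0, 0, 0, 0, 0, 0, 0],
       [0, 0, 0, 0, 0, 0, 0, 0, 0, 0],
       [0, 0, 0, 0, 0, 0, 0, 0, 0, 0],
       [-2, -1, 0, 0, 0, 0, 0, 0, 0, 0],
       [0, 0, 0, 0, 0, 0, 0, 0, 0, 0],
       [0, 0, 0, 0, 0, 0, 0, 0, 0, 0],
       [0, 0, 0, 0, 0, 0, 0, 0, 0, 0],
       [-3, -1, 0, 0, 0, 0, 0, 0, 0, 0],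
       [0, 0, 0, 1, 0, 1, 0, 0, 0, 2],
       [0, 0, -1, 2, 0, 1, 0, 0, 0, 3],
       [0, 0, -1, 2, 0, 2, 0, 0, 0, 4],
       [0, 0, -2, 3, 0, 2, 0, 0, 0, 6],
       [0, 0, -2, 2, -1, 2, 0, 0, 0, 5],
       [0, 0, -2, 1, -1, 2, -1, 0, 0, 4],
       [0, 0, -2, 0, -1, 2, -1, -1, 0, 3],
       [0, 0, -2, -1, -1, 2, -1, -1, -1, 2]],
    perp_quarter_norm =
      [[1, -1, -1, -1, 1, -1],
       [0, 1, 1, 1, 0, 1],
       [0, 0, 1, 1, -1, 0],
       [0, 0, 0, 1, 0, 0],
       [0, 0, 0, 0, 1, 0],
       [0, 0, 0, 0, 0, 1]]\<rparr>"

lemma valid_cert_D4E8: "valid_cert (scale 2 U_lat \<oplus>\<^sub>L A2_lat \<oplus>\<^sub>L D4_lat \<oplus>\<^sub>L E8_lat) cert_D4E8"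
  by code_simp

definition cert_E8_2 :: achirality_cert where
  "cert_E8_2 = \<lparr>
    inv_mat =
      [[313, -312, 312, -312, 78, -6, -192, 6, 210, 0, -222, 108],
       [-312, 313, -312, 312, -78, 6, 192, -6, -210, 0, 222, -108],
       [-208, 208, -207, 208, -52, 4, 128, -4, -140, 0, 148, -72],
       [208, -208, 208, -207, 52, -4, -128, 4, 140, 0, -148, 72],
       [-6, 6, -6, 6, -1, 0, 4, 0, -4, 0, 4, -4],
       [-24, 24, -24, 24, -6, -1, 16, 0, -16, 0, 16, -10],
       [66, -66, 66, -66, 16, -2, -39, 2, 44, 0, -48, 20],
       [-54, 54, -54, 54, -14, 0, 36, -1, -36, 0, 36, -22],
       [-144, 144, -144, 144, -36, 2, 90, -2, -97, 0, 100, -52],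
       [-24, 24, -24, 24, -6, 0, 16, 0, -16, -1, 16, -10],
       [96, -96, 96, -96, 24, -2, -58, 2, 64, 0, -69, 32],
       [-6, 6, -6, 6, -2, 0, 4, 0, -4, 0, 4, -3]],
    six_inv_gram =
      [[0, 3, 0, 0, 0, 0, 0, 0, 0, 0, 0, 0],
       [3, 0, 0, 0, 0, 0, 0, 0, 0, 0, 0, 0],
       [0, 0, 4, 2, 0, 0, 0, 0, 0, 0, 0, 0],
       [0, 0, 2, 4, 0, 0, 0, 0, 0, 0, 0, 0],
       [0, 0, 0, 0, 12, 15, 21, 30, 24, 18, 12, 6],
       [0, 0, 0, 0, 15, 24, 30, 45, 36, 27, 18, 9],
       [0, 0, 0, 0, 21, 30, 42, 60, 48, 36, 24, 12],
       [0, 0, 0, 0, 30, 45, 60, 90, 72, 54, 36, 18],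
       [0, 0, 0, 0, 24, 36, 48, 72, 60, 45, 30, 15],
       [0, 0, 0, 0, 18, 27, 36, 54, 45, 36, 24, 12],
       [0, 0, 0, 0, 12, 18, 24, 36, 30, 24, 18, 9],
       [0, 0, 0, 0, 6, 9, 12, 18, 15, 12, 9, 6]],
    rev_lin =
      [[0, 1, 0, 0, 0, 0, 0, 0, 0, 0, 0, 0],
       [1, 0, 0, 0, 0, 0, 0, 0, 0, 0, 0, 0],
       [2, 1, 2, 0, 1, 1, 1, 0, 0, 1, 2, 1],
       [1, 2, 2, 0, 2, 2, 2, 0, 0, 2, 1, 2],
       [0, 0, 0, 0, 2, 2, 1, 1, 2, 2, 2, 0],
       [0, 0, 0, 0, 2, 2, 1, 1, 2, 2, 2, 0],
       [0, 0, 0, 0, 1, 1, 0, 0, 1, 1, 1, 1],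
       [0, 0, 0, 0, 1, 1, 0, 2, 0, 1, 2, 0],
       [0, 0, 0, 0, 2, 2, 1, 0, 1, 2, 0, 2],
       [0, 0, 0, 0, 2, 2, 1, 1, 2, 2, 2, 0],
       [0, 0, 0, 0, 2, 2, 1, 2, 0, 2, 1, 1],
       [0, 0, 0, 0, 0, 0, 1, 0, 2, 0, 1, 0]],
    rev_rem =
      [[104, -104, 104, -104, 26, -2, -64, 2, 70, 0, -74, 36],
       [-104, 104, -104, 104, -26, 2, 64, -2, -70, 0, 74, -36],
       [-70, 68, -70, 70, -18, 0, 42, 0, -46, 0, 48, -24],
       [68, -70, 68, -68, 16, -4, -44, 4, 48, -2, -48, 22],
       [-2, 2, -2, 2, -2, -2, 2, 2, -2, 0, 0, 0],
       [-8, 8, -8, 8, -4, -2, 6, 2, -6, 0, 4, -2],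
       [22, -22, 22, -22, 4, -2, -12, 2, 14, 0, -16, 6],
       [-18, 18, -18, 18, -6, 0, 14, -2, -10, 0, 10, -6],
       [-48, 48, -48, 48, -14, -2, 30, 2, -32, -2, 36, -20],
       [-8, 8, -8, 8, -4, -2, 6, 2, -6, 0, 4, -2],
       [32, -32, 32, -32, 6, -2, -18, 0, 24, -2, -22, 10],
       [-2, 2, -2, 2, 0, 0, 0, 2, -4, 2, 0, 0]],
    pos_vec = [3, -3, -2, 2, 0, 0, 1, 0, -1, 0, 1, 0],
    psd_scale = 1191960,
    psd_lin =
      [-4469850, 4469850, -4469850, 4469850, 893970, 0, 1787940, 0, -2979900, 0, 2979900, -1489950],
    psd_squares =
      [(26488, [45, -43, 45, -45, 3, 0, -24, 0, 30, 0, -30, 15]),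
       (602, [0, 88, -45, 45, -3, 0, 24, 0, -30, 0, 30, -15]),
       (630, [0, 0, 43, 1, -3, 0, 24, 0, -30, 0, 30, -15]),
       (5940, [0, 0, 0, 14, 1, 0, -8, 0, 10, 0, -10, 5]),
       (7740, [0, 0, 0, 0, 11, 0, -4, 0, -2, 0, 2, -1]),
       (1191960, [0, 0, 0, 0, 0, 2, 0, -1, 0, 0, 0, 0]),
       (18060, [0, 0, 0, 0, 0, 0, 12, -11, 6, 0, -6, 3]),
       (28380, [0, 0, 0, 0, 0, 0, 0, 7, -6, 0, -6, 3]),
       (85140, [0, 0, 0, 0, 0, 0, 0, 0, 4, -7, 4, -2]),
       (595980, [0, 0, 0, 0, 0, 0, 0, 0, 0, 1, 0, -2]),
       (1191960, [0, 0, 0, 0, 0, 0, 0, 0, 0, 0, 0, 1])],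
    exp_base = 7,
    exp_bound = 3,
    exp_lead = [0, -1, 0, 0, -3, 0, 1, 1, 0, 0, 0, 1],
    exp_digits =
      [[0, 1, 1, 0, 0, 0, 0, 0, 0, 0, 0, 0],
       [0, -1, 0, 1, 0, 0, 0, 0, 0, 0, 0, 0],
       [1, 0, 0, 1, 0, 0, 0, 0, 0, 0, 0, 0],
       [2, -2, -2, 1, 1, 1, 2, 2, 1, 1, 1, 0]],
    exp_coeff = -47310,
    perp_basis =
      [[0, 0, 0, 0, 0, 1, 0, 1, 0, 0, 0, 0],
       [0, 0, 0, 0, 0, 0, 0, 0, 0, 1, 0, 0],
       [-12, 12, 8, -8, 0, 0, -3, 1, 5, 0, -4, 0],
       [6, -6, -4, 4, 0, -1, 1, -2, -4, -2, 1, 0],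
       [0, 0, 0, 0, 1, 1, 2, 3, 3, 2, 2, 1],
       [3, -3, -2, 2, -1, -2, -1, -3, -3, -2, 0, -1]],
    perp_coords =
      [[-6, 0, 6, 0, -30, -6, 24, 7, -11, 0, 0, 0],
       [-10, 0, 10, 0, -48, -10, 40, 10, -18, 1, 0, 0],
       [-4, 0, 4, 0, -19, -4, 16, 4, -7, 0, 0, 0],
       [-5, 0, 5, 0, -23, -5, 20, 5, -9, 0, 0, 0],
       [-1, 0, 1, 0, -5, -2, 4, 2, -2, 0, 0, 0],
       [-1, 0, 1, 0, -6, -2, 4, 2, -2, 0, 0, 0]],
    perp_den = 2,
    perp_corr =
      [[-12, 12, 68, 34, -36, 36],
       [12, -12, -68, -35, 37, -36],
       [8, -8, -44, -22, 24, -24],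
       [-8, 8, 46, 24, -24, 24],
       [0, 0, 0, 0, 0, 0],
       [0, 0, 0, 0, 0, 0],
       [-5, 5, 28, 14, -15, 15],
       [0, 0, 0, 0, 0, 0],
       [0, 0, 0, 0, 0, 0],
       [0, 0, 0, 0, 0, 0],
       [-6, 7, 40, 20, -22, 20],
       [1, 0, -2, -1, 1, -2]],
    perp_quarter_norm =
      [[1, 0, -1, 0, -1, -1],
       [0, 1, -1, -1, -1, -1],
       [0, 0, 1, 0, 1, 1],
       [0, 0, 0, 1, 0, 0],
       [0, 0, 0, 0, 1, 1],
       [0, 0, 0, 0, 0, 1]]\<rparr>"

lemma valid_cert_E8_2: "valid_cert (scale 2 U_lat \<oplus>\<^sub>L A2_lat \<oplus>\<^sub>L scale 2 E8_lat) cert_E8_2"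
  by code_simp

definition cert_E8 :: achirality_cert where
  "cert_E8 = \<lparr>
    inv_mat =
      [[3, -4, 3, -3, 0, -2, 0, 2, -1, -1, 0, 2],
       [-4, 3, -3, 3, 0, 2, 0, -2, 1, 1, 0, -2],
       [-2, 2, -2, 2, 0, 1, 0, -1, 1, 0, 0, -1],
       [2, -2, 2, -2, 0, -1, 0, 1, 0, -1, 0, 1],
       [0, 0, 1, 1, 1, 0, 0, 0, 0, 0, -1, 0],
       [2, -2, 3, 0, 0, -1, 0, 2, -1, -1, -1, 1],
       [0, 0, 2, 2, 0, 0, 1, 0, 0, 0, -2, 0],
       [0, 0, 3, 3, 0, 0, 0, 1, 0, 0, -3, 0],
       [2, -2, 4, 1, 0, -2, 0, 2, 0, -1, -2, 1],
       [2, -2, 3, 0, 0, -2, 0, 2, 0, -1, -2, 1],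
       [0, 0, 1, 1, 0, 0, 0, 0, 1, -1, -1, 0],
       [-2, 2, -1, 2, 0, 1, 0, -1, 1, 0, 0, -2]],
    six_inv_gram =
      [[0, 3, 0, 0, 0, 0, 0, 0, 0, 0, 0, 0],
       [3, 0, 0, 0, 0, 0, 0, 0, 0, 0, 0, 0],
       [0, 0, 4, 2, 0, 0, 0, 0, 0, 0, 0, 0],
       [0, 0, 2, 4, 0, 0, 0, 0, 0, 0, 0, 0],
       [0, 0, 0, 0, 24, 30, 42, 60, 48, 36, 24, 12],
       [0, 0, 0, 0, 30, 48, 60, 90, 72, 54, 36, 18],
       [0, 0, 0, 0, 42, 60, 84, 120, 96, 72, 48, 24],
       [0, 0, 0, 0, 60, 90, 120, 180, 144, 108, 72, 36],
       [0, 0, 0, 0, 48, 72, 96, 144, 120, 90, 60, 30],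
       [0, 0, 0, 0, 36, 54, 72, 108, 90, 72, 48, 24],
       [0, 0, 0, 0, 24, 36, 48, 72, 60, 48, 36, 18],
       [0, 0, 0, 0, 12, 18, 24, 36, 30, 24, 18, 12]],
    rev_lin =
      [[1, 2, 0, 0, 0, 2, 0, 0, 2, 2, 0, 1],
       [2, 1, 0, 0, 0, 1, 0, 0, 1, 1, 0, 2],
       [1, 2, 1, 0, 1, 2, 2, 0, 0, 2, 1, 0],
       [2, 1, 1, 0, 1, 1, 2, 0, 2, 1, 1, 1],
       [0, 0, 2, 0, 1, 1, 0, 2, 0, 1, 2, 1],
       [2, 1, 0, 0, 1, 0, 2, 0, 2, 2, 0, 2],
       [0, 0, 1, 0, 0, 2, 0, 1, 0, 2, 1, 2],
       [0, 0, 0, 0, 2, 0, 1, 0, 0, 0, 0, 0],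
       [2, 1, 2, 0, 0, 2, 0, 0, 2, 0, 2, 0],
       [2, 1, 0, 0, 1, 2, 2, 0, 0, 0, 0, 2],
       [0, 0, 2, 0, 2, 0, 1, 0, 2, 0, 2, 1],
       [1, 2, 1, 0, 1, 2, 2, 0, 0, 2, 1, 0]],
    rev_rem =
      [[0, -2, 1, -1, 0, -2, 0, 2, -1, -1, 1, 0],
       [-2, 0, -1, 1, 0, 0, 0, 0, 0, 0, 1, -2],
       [-2, 0, -1, 1, 0, -1, -1, 1, 1, -1, 0, 0],
       [0, -2, 0, 0, 0, -1, -1, 2, -1, 0, 0, 0],
       [0, 0, -1, 1, 0, 0, 1, -1, 1, 0, -1, 0],
       [0, -2, 1, 0, 0, 0, -1, 2, -1, -1, 1, -1],
       [0, 0, 0, 1, 0, -1, 1, 0, 1, -1, 0, -1],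
       [0, 0, 1, 1, -1, 0, 0, 1, 0, 0, -1, 0],
       [0, -2, 0, 1, 0, -2, 0, 2, -1, 1, -2, 1],
       [0, -2, 1, 0, 0, -2, -1, 2, 0, 0, 0, -1],
       [0, 0, -1, 1, -1, 0, 0, 1, -1, 1, -1, 0],
       [-2, 0, -1, 1, 0, -1, -1, 1, 1, -1, 0, 0]],
    pos_vec = [2, -2, -1, 1, 0, 0, 0, -2, 0, 0, 0, -1],
    psd_scale = 2646482580,
    psd_lin =
      [-15878895480, 15878895480, -11909171610, 11909171610, 0, 7939447740, 7939447740, -15878895480, 7939447740, 2646482580, -1323241290, -5292965160],
    psd_squares =
      [(220540215, [24, -23, 18, -18, 0, -12, -12, 24, -12, -2, -2, 10]),
       (4692345, [0, 47, -18, 18, 0, 12, 12, -24, 12, 2, 2, -10]),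
       (840420, [0, 0, 67, -20, 0, 18, 18, -36, 18, 3, 3, -15]),
       (4086180, [0, 0, 0, 29, 0, -6, -6, 12, -6, -1, -1, 5]),
       (1323241290, [0, 0, 0, 0, 2, 0, -1, 0, 0, 0, 0, 0]),
       (1983870, [0, 0, 0, 0, 0, 46, -12, -5, -12, -2, -2, 10]),
       (1278494, [0, 0, 0, 0, 0, 0, 45, -10, -24, -4, -4, 20]),
       (29405362, [0, 0, 0, 0, 0, 0, 0, 5, -6, 2, 2, -10]),
       (132324129, [0, 0, 0, 0, 0, 0, 0, 0, 4, -5, 0, 0]),
       (18903447, [0, 0, 0, 0, 0, 0, 0, 0, 0, 7, -8, 0]),
       (378068940, [0, 0, 0, 0, 0, 0, 0, 0, 0, 0, 1, 0])],
    exp_base = 7,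
    exp_bound = 3,
    exp_lead = [0, 0, 0, 0, 0, 0, 1, 0, 0, 0, 0, 0],
    exp_digits =
      [[0, 0, 0, 0, 0, 1, 1, 1, 0, 0, 0, 0],
       [0, 0, 0, 0, 1, 0, 0, 0, 0, 0, 0, 0],
       [1, -1, 0, 1, 1, 1, 2, 2, 3, 2, 1, 0],
       [2, -2, -1, 1, 1, 0, 1, -1, 1, 1, 0, -1]],
    exp_coeff = -16000,
    perp_basis =
      [[1, 0, 0, 0, 0, 1, 0, 0, 1, 1, 0, 0],
       [1, 0, -1, 0, 1, 2, 2, 3, 3, 2, 1, 1],
       [0, 0, 0, 0, 1, 1, 2, 3, 2, 2, 2, 0],
       [1, 0, 0, 1, -1, -1, -2, -3, -2, -1, -1, 0],
       [-2, 1, 1, -1, 0, -1, 0, 0, -1, -1, 0, 1],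
       [1, -1, -1, 0, 2, 4, 4, 6, 6, 5, 3, 1]],
    perp_coords =
      [[1, 0, 1, -1, 0, 0, 0, 0, 0, 0, 0, 0],
       [0, 1, -1, 0, 0, 0, 0, 0, 0, 0, 0, 0],
       [1, 0, 1, 0, 2, -1, 0, 0, 0, 0, 0, 0],
       [-1, 1, 0, 2, -1, 1, 0, 0, 0, 0, 0, 0],
       [-1, 1, 0, 1, -1, 1, 0, 0, 0, 0, 0, 0],
       [-1, 0, 0, 1, -1, 1, 0, 0, 0, 0, 0, 0]],
    perp_den = 1,
    perp_corr =
      [[0, 0, 0, 0, 0, 0],
       [0, 0, 0, 0, 0, 0],
       [0, 0, 0, 0, 0, 0],
       [0, 0, 0, 0, 0, 0],
       [0, 0, 0, 0, 0, 0],
       [0, 0, 0, 0, 0, 0],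
       [0, 0, 0, -1, 0, 0],
       [0, -1, 0, -2, 0, 0],
       [0, 0, -1, -1, 0, 0],
       [0, 0, -2, -2, -2, 1],
       [1, 0, -2, -2, -2, 0],
       [0, 2, -2, 1, -1, 0]],
    perp_quarter_norm =
      [[1, 1, -1, 1, -1, 1],
       [0, 1, -1, 1, -1, 1],
       [0, 0, 1, -1, 0, 0],
       [0, 0, 0, 1, -1, 0],
       [0, 0, 0, 0, 1, -1],
       [0, 0, 0, 0, 0, 1]]\<rparr>"

lemma valid_cert_E8: "valid_cert (scale 2 U_lat \<oplus>\<^sub>L A2_lat \<oplus>\<^sub>L E8_lat) cert_E8"
  by code_simp

theorem proposition3p5:
  shows "achiral (scale 2 U_lat \<oplus>\<^sub>L A2_lat \<oplus>\<^sub>L D4_lat \<oplus>\<^sub>L D4_lat) \<and>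
         achiral (scale 2 U_lat \<oplus>\<^sub>L A2_lat \<oplus>\<^sub>L D4_lat \<oplus>\<^sub>L E8_lat) \<and>
         achiral (scale 2 U_lat \<oplus>\<^sub>L A2_lat \<oplus>\<^sub>L scale 2 E8_lat) \<and>
         achiral (scale 2 U_lat \<oplus>\<^sub>L A2_lat \<oplus>\<^sub>L E8_lat)"
  using valid_cert_2D4 valid_cert_D4E8 valid_cert_E8_2 valid_cert_E8
  by (blast intro: achiral_if_valid_cert)

end
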